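(* Let $q$ be a prime power and $n=q^2-1$. Let $0\le t<z$ and $\Delta=\Delta(t)=\bigcup_{j=0}^t I_{m_j}$, and let $m_t=b_0+b_1q$ be the $q$-adic expression of $m_t$ ($0\le b_0,b_1\le q-1$). Then the EAQECC associated with the extended BCH code $E_\Delta$ of length $q^2$ over $\mathbb{F}_q$ (Euclidean construction) has parameters $[[q^2,\,q^2-2\sum_{j=0}^t i_{m_j}+c,\,\ge m_{t+1}+1;\,c]]_q$, where $$c=4\Big(\tfrac{b_1(b_1+1)}{2}-\max\{0,b_1-\lceil q/2\rceil\}\,\big(b_1-\lfloor q/2\rfloor\big)+\max\{0,\,b_0-\max\{q-1-b_1,b_1\}+1\}\Big)-3\delta-2\max\Big\{0,\Big\lfloor\tfrac{m_t}{q+1}\Big\rfloor-\Big\lfloor\tfrac{q-1}{2}\Big\rfloor\Big\}-2\min\Big\{\Big\lfloor\tfrac{m_t}{q-1}\Big\rfloor,\Big\lfloor\tfrac{q}{2}\Big\rfloor\Big\},$$ with $\delta=1$ if $q$ is odd and $m_t\ge (q^2-1)/2$, and $\delta=0$ otherwise.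
   Context: Identify $\mathbb{Z}_n$ with $\mathcal{H}=\{0,1,\ldots,n-1\}$. The cyclotomic coset of $x$ with respect to $q$ is $I_x=\{xq^s \bmod n: s\ge 0\}$ (here $I_x=\{x,\,xq\bmod n\}$). Let $0=m_0<m_1<\dots<m_z$ be the minimal (least) elements of the distinct cyclotomic cosets, and $i_{m_j}=\#I_{m_j}$. Let $P_1,\dots,P_{q^2}$ be all the elements of $\mathbb{F}_{q^2}$ (roots of $X^{q^2}-X$). For $\Delta\subseteq\mathcal{H}$, $D_\Delta\subseteq\mathbb{F}_{q^2}^{q^2}$ is the code spanned by $(P_1^i,\dots,P_{q^2}^i)$, $i\in\Delta$ (with $0^0=1$), and $E_\Delta=D_\Delta\cap\mathbb{F}_q^{q^2}$ is its subfield subcode. For an $\mathbb{F}_q$-linear code $E\subseteq\mathbb{F}_q^N$ of dimension $k$ whose Euclidean dual $C$ (with respect to $x\cdot y=\sum x_iy_i$) has minimum distance $d$, the associated EAQECC is an entanglement-assisted quantum error-correcting code over $\mathbb{F}_q$ with parameters $[[N,\,N-2k+c,\,d;\,c]]_q$, where $c=\dim E-\dim(E\cap C)$. *)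

theory Defs
  imports "HOL-Computational_Algebra.Primes"
begin

definition cyc_n :: "nat \<Rightarrow> nat" where
  "cyc_n q = q^2 - 1"

definition cyc_coset :: "nat \<Rightarrow> nat \<Rightarrow> nat set" where
  "cyc_coset q x = {(x * q^s) mod cyc_n q | s. True}"

definition coset_leaders :: "nat \<Rightarrow> nat set" where
  "coset_leaders q = {x \<in> {0..<cyc_n q}. x = Min (cyc_coset q x)}"

definition leader :: "nat \<Rightarrow> nat \<Rightarrow> nat" where
  "leader q j = sorted_list_of_set (coset_leaders q) ! j"

definition leader_z :: "nat \<Rightarrow> nat" where
  "leader_z q = card (coset_leaders q) - 1"

definition Delta :: "nat \<Rightarrow> nat \<Rightarrow> nat set" where
  "Delta q t = (\<Union>j\<in>{0..t}. cyc_coset q (leader q j))"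

text \<open>Words of length q^2 over F_{q^2} are indexed by the points of the field 'a itself
  (coordinate P carries the evaluation at P). F_q is the subfield {x. x^q = x}.\<close>

definition subfield :: "nat \<Rightarrow> 'a::field set" where
  "subfield q = {x. x ^ q = x}"

text \<open>D_Delta: the F_{q^2}-span of the vectors (P^i)_P, i \<in> Delta (0^0 = 1 in Isabelle).\<close>
definition D_code :: "nat set \<Rightarrow> ('a::{field,finite} \<Rightarrow> 'a) set" where
  "D_code Dl = {v. \<exists>a::nat \<Rightarrow> 'a. v = (\<lambda>P. \<Sum>i\<in>Dl. a i * P ^ i)}"

definition E_code :: "nat \<Rightarrow> nat set \<Rightarrow> ('a::{field,finite} \<Rightarrow> 'a) set" where
  "E_code q Dl = {v \<in> D_code Dl. \<forall>P. v P \<in> subfield q}"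

definition eucl_dual :: "nat \<Rightarrow> ('a::{field,finite} \<Rightarrow> 'a) set \<Rightarrow> ('a \<Rightarrow> 'a) set" where
  "eucl_dual q E = {y. (\<forall>P. y P \<in> subfield q) \<and> (\<forall>x\<in>E. (\<Sum>P\<in>UNIV. x P * y P) = 0)}"

definition fq_span :: "nat \<Rightarrow> ('a::{field,finite} \<Rightarrow> 'a) set \<Rightarrow> ('a \<Rightarrow> 'a) set" where
  "fq_span q B = {v. \<exists>c. (\<forall>b\<in>B. c b \<in> subfield q) \<and> v = (\<lambda>P. \<Sum>b\<in>B. c b * b P)}"

definition fq_dim :: "nat \<Rightarrow> ('a::{field,finite} \<Rightarrow> 'a) set \<Rightarrow> nat" where
  "fq_dim q E = (LEAST k. \<exists>B. B \<subseteq> E \<and> card B = k \<and> fq_span q B = E)"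

definition weight :: "('a::{field,finite} \<Rightarrow> 'a) \<Rightarrow> nat" where
  "weight y = card {P. y P \<noteq> 0}"

definition min_dist :: "('a::{field,finite} \<Rightarrow> 'a) set \<Rightarrow> nat" where
  "min_dist C = Min {weight y | y. y \<in> C \<and> y \<noteq> (\<lambda>_. 0)}"

definition eaqecc_params ::
  "nat \<Rightarrow> ('a::{field,finite} \<Rightarrow> 'a) set \<Rightarrow> nat \<Rightarrow> int \<Rightarrow> nat \<Rightarrow> int \<Rightarrow> bool" where
  "eaqecc_params q E N K d c \<longleftrightarrow>
     (let C = eucl_dual q E; k = fq_dim q E in
       N = card (UNIV :: 'a set) \<and>
       c = int k - int (fq_dim q (E \<inter> C)) \<and>
       K = int N - 2 * int k + c \<and>
       min_dist C \<ge> d)"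

end

theory Submission
  imports Defs "HOL-Computational_Algebra.Polynomial" "HOL-Library.FuncSet"
begin

lemma card_roots_binomial_le:
  fixes c d :: "'a::idom"
  assumes "j < k"
  shows "card {x. x ^ k = c * x ^ j + d} \<le> k"
proof -
  define f where "f = monom 1 k - monom c j - [:d:]"
  have "coeff f k = 1"
    using assms by (cases k) (auto simp: f_def)
  then have "f \<noteq> 0" by auto
  moreover have "degree f \<le> k"
    using assms unfolding f_def
    by (intro degree_diff_le) (auto simp: degree_monom_le intro: order.trans[OF degree_monom_le])
  ultimately have "card {x. poly f x = 0} \<le> k"
    using card_poly_roots_bound[of f] by simp
  moreover have "{x. poly f x = 0} = {x. x ^ k = c * x ^ j + d}"
    by (auto simp: f_def poly_monom algebra_simps)
  ultimately show ?thesis by simp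
qed

lemma of_nat_card_UNIV_eq_0: "of_nat (card (UNIV :: 'a::{ring_1,finite} set)) = (0 :: 'a)"
proof -
  have "(\<Sum>x\<in>UNIV. x + 1) = (\<Sum>x\<in>UNIV. x :: 'a)"
    by (rule sum.reindex_bij_witness[of _ "\<lambda>x. x - 1" "\<lambda>x. x + 1"]) auto
  then show ?thesis by (simp add: sum.distrib)
qed

definition subfield_trace :: "nat \<Rightarrow> 'a::field \<Rightarrow> 'a" where
  "subfield_trace q x = x + x ^ q"

locale fq2_field =
  fixes q :: nat
  assumes prime_power: "\<exists>p r. prime p \<and> r > 0 \<and> q = p ^ r"
    and card_UNIV: "card (UNIV :: 'a::{field,finite} set) = q ^ 2"
begin

lemma q_ge_2: "q \<ge> 2"
proof -
  obtain p r where "prime p" "r > 0" "q = p ^ r" using prime_power by blast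
  then show ?thesis
    using prime_ge_2_nat[of p] power_increasing[of 1 r p] by auto
qed

lemma of_nat_card_eq_0: "of_nat (q ^ 2) = (0 :: 'a)"
  using of_nat_card_UNIV_eq_0[where 'a = 'a] by (simp add: card_UNIV)

lemma q_eq_CHAR_power: "\<exists>r. q = CHAR('a) ^ r"
proof -
  obtain p r where p: "prime p" "q = p ^ r" using prime_power by blast
  have "prime CHAR('a)"
    by (intro prime_CHAR_semidom finite_imp_CHAR_pos) simp
  moreover have "CHAR('a) dvd p ^ (r * 2)"
    using of_nat_card_eq_0 unfolding of_nat_eq_0_iff_char_dvd p(2) power_mult .
  ultimately have "CHAR('a) = p"
    using p(1) prime_dvd_power primes_dvd_imp_eq by blast
  then show ?thesis using p(2) by blast
qed

lemma frobenius_add: "(x + y :: 'a) ^ q = x ^ q + y ^ q"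
proof -
  have "prime CHAR('a)"
    by (intro prime_CHAR_semidom finite_imp_CHAR_pos) simp
  with q_eq_CHAR_power show ?thesis
    using freshmans_dream' by blast
qed

lemma frobenius_sum: "(\<Sum>i\<in>A. f i :: 'a) ^ q = (\<Sum>i\<in>A. f i ^ q)"
proof -
  have "prime CHAR('a)"
    by (intro prime_CHAR_semidom finite_imp_CHAR_pos) simp
  with q_eq_CHAR_power show ?thesis
    using freshmans_dream_sum' by blast
qed

lemma frobenius_minus: "(- x :: 'a) ^ q = - (x ^ q)"
  using frobenius_add[of "- x" x] q_ge_2 by (simp add: eq_neg_iff_add_eq_0 zero_power)

lemma frobenius_diff: "(x - y :: 'a) ^ q = x ^ q - y ^ q"
  using frobenius_add[of x "- y"] by (simp add: frobenius_minus)

lemma power_cyc_n: "(x :: 'a) \<noteq> 0 \<Longrightarrow> x ^ cyc_n q = 1"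
proof -
  assume x: "x \<noteq> 0"
  let ?S = "UNIV - {0 :: 'a}"
  have "(\<Prod>y\<in>?S. x * y) = (\<Prod>y\<in>?S. y)"
    by (rule prod.reindex_bij_witness[of _ "\<lambda>y. y / x" "\<lambda>y. x * y"]) (use x in auto)
  then have "x ^ card ?S * (\<Prod>y\<in>?S. y) = (\<Prod>y\<in>?S. y)"
    by (simp add: prod.distrib)
  then show ?thesis
    by (simp add: card_UNIV card_Diff_singleton cyc_n_def)
qed

lemma power_card: "(x :: 'a) ^ (q ^ 2) = x"
proof (cases "x = 0")
  case False
  have "q ^ 2 = Suc (cyc_n q)" using q_ge_2 by (simp add: cyc_n_def)
  then show ?thesis using power_cyc_n[OF False] by simp
qed (use q_ge_2 in \<open>simp add: zero_power\<close>)

lemma frobenius_frobenius: "((x :: 'a) ^ q) ^ q = x"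
  using power_card by (simp add: power_mult[symmetric] power2_eq_square)

lemma power_mod_cyc_n: "(x :: 'a) \<noteq> 0 \<Longrightarrow> x ^ k = x ^ (k mod cyc_n q)"
proof -
  assume "x \<noteq> 0"
  have "x ^ k = (x ^ cyc_n q) ^ (k div cyc_n q) * x ^ (k mod cyc_n q)"
    by (simp flip: power_mult power_add)
  then show ?thesis using power_cyc_n[OF \<open>x \<noteq> 0\<close>] by simp
qed

lemma sum_powers:
  assumes "k < 2 * cyc_n q"
  shows "(\<Sum>P\<in>UNIV. P ^ k :: 'a) = (if k = cyc_n q then -1 else 0)"
proof -
  have "2 ^ 2 \<le> q ^ 2" using q_ge_2 by (rule power_mono) simp
  then have n_pos: "cyc_n q > 0" by (simp add: cyc_n_def)
  have vanish: "(\<Sum>P\<in>UNIV. P ^ i :: 'a) = 0" if i: "i < cyc_n q" for i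
  proof (cases "i = 0")
    case True then show ?thesis using of_nat_card_eq_0 by (simp add: card_UNIV)
  next
    case False
    have "\<not> UNIV - {0::'a} \<subseteq> {x. x ^ i = 0 * x ^ 0 + 1}"
    proof
      assume "UNIV - {0::'a} \<subseteq> {x. x ^ i = 0 * x ^ 0 + 1}"
      then have "card (UNIV - {0::'a}) \<le> i"
        using card_roots_binomial_le[of 0 i "0::'a" 1] False card_mono[OF finite]
        by (meson order.trans gr0I)
      then show False using i by (simp add: card_UNIV card_Diff_singleton cyc_n_def)
    qed
    then obtain a :: 'a where a: "a \<noteq> 0" "a ^ i \<noteq> 1" by auto
    have "(\<Sum>P\<in>UNIV. (a * P) ^ i) = (\<Sum>P\<in>UNIV. P ^ i)"
      by (rule sum.reindex_bij_witness[of _ "\<lambda>P. P / a" "\<lambda>P. a * P"]) (use a in auto)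
    then have "a ^ i * (\<Sum>P\<in>UNIV. P ^ i) = 1 * (\<Sum>P\<in>UNIV. P ^ i)"
      by (simp add: power_mult_distrib sum_distrib_left)
    then show ?thesis using a(2) by (metis mult_cancel_right)
  qed
  consider "k < cyc_n q" | "k = cyc_n q" | "cyc_n q < k" by linarith
  then show ?thesis
  proof cases
    case 2
    have "(\<Sum>P\<in>UNIV. P ^ k :: 'a) = (\<Sum>P\<in>UNIV. if (P :: 'a) = 0 then 0 else 1)"
      by (intro sum.cong refl) (use 2 n_pos power_cyc_n in \<open>auto simp: zero_power\<close>)
    also have "\<dots> = of_nat (q ^ 2) - 1"
      using n_pos by (simp add: sum.If_cases Compl_eq_Diff_UNIV card_UNIV card_Diff_singleton
          of_nat_diff cyc_n_def)
    finally show ?thesis using 2 of_nat_card_eq_0 by simp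
  next
    case 3
    then have k_mod: "k mod cyc_n q = k - cyc_n q" "k - cyc_n q < cyc_n q" "k - cyc_n q > 0"
      using assms by (auto simp: le_mod_geq)
    have "(P :: 'a) ^ k = P ^ (k - cyc_n q)" for P
    proof (cases "P = 0")
      case False
      then show ?thesis using power_mod_cyc_n[OF False, of k] k_mod(1) by simp
    qed (use k_mod 3 in \<open>simp add: zero_power\<close>)
    then show ?thesis using vanish[OF k_mod(2)] 3 by simp
  qed (simp add: vanish)
qed

abbreviation Fq :: "'a set" where "Fq \<equiv> subfield q"

lemma subfield_iff: "x \<in> Fq \<longleftrightarrow> x ^ q = x"
  by (simp add: subfield_def)

lemma subfield_0 [simp]: "0 \<in> Fq"
  using q_ge_2 by (simp add: subfield_iff zero_power)

lemma subfield_1 [simp]: "1 \<in> Fq"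
  by (simp add: subfield_iff)

lemma subfield_add [simp]: "x \<in> Fq \<Longrightarrow> y \<in> Fq \<Longrightarrow> x + y \<in> Fq"
  by (simp add: subfield_iff frobenius_add)

lemma subfield_mult [simp]: "x \<in> Fq \<Longrightarrow> y \<in> Fq \<Longrightarrow> x * y \<in> Fq"
  by (simp add: subfield_iff power_mult_distrib)

lemma subfield_uminus [simp]: "x \<in> Fq \<Longrightarrow> - x \<in> Fq"
  by (simp add: subfield_iff frobenius_minus)

lemma subfield_diff [simp]: "x \<in> Fq \<Longrightarrow> y \<in> Fq \<Longrightarrow> x - y \<in> Fq"
  by (simp add: subfield_iff frobenius_diff)

lemma subfield_divide [simp]: "x \<in> Fq \<Longrightarrow> y \<in> Fq \<Longrightarrow> x / y \<in> Fq"
  by (simp add: subfield_iff power_divide)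

lemma subfield_sum [simp]: "(\<And>i. i \<in> A \<Longrightarrow> f i \<in> Fq) \<Longrightarrow> sum f A \<in> Fq"
  by (induction A rule: infinite_finite_induct) auto

lemma subfield_trace_in_subfield [simp]: "subfield_trace q x \<in> Fq"
  by (simp add: subfield_iff subfield_trace_def frobenius_add frobenius_frobenius add.commute)

lemma subfield_trace_add:
  "subfield_trace q (x + y :: 'a) = subfield_trace q x + subfield_trace q y"
  by (simp add: subfield_trace_def frobenius_add)

lemma subfield_trace_scale:
  "c \<in> Fq \<Longrightarrow> subfield_trace q (c * x) = c * subfield_trace q x"
  by (simp add: subfield_trace_def subfield_iff power_mult_distrib distrib_left)

lemma subfield_proper: "\<exists>g :: 'a. g \<notin> Fq"
proof -
  have "card {x :: 'a. x ^ q = 1 * x ^ 1 + 0} \<le> q"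
    using q_ge_2 by (intro card_roots_binomial_le) simp
  moreover have "q < card (UNIV :: 'a set)"
    using q_ge_2 by (simp add: card_UNIV power2_eq_square)
  ultimately have "{x :: 'a. x ^ q = 1 * x ^ 1 + 0} \<noteq> UNIV" by auto
  then show ?thesis by (auto simp: subfield_iff)
qed

lemma subfield_trace_nondegenerate:
  assumes "a \<noteq> (0 :: 'a)"
  shows "\<exists>\<beta>. subfield_trace q (\<beta> * a) \<noteq> 0"
proof -
  have "card {x :: 'a. x ^ q = (- 1) * x ^ 1 + 0} \<le> q"
    using q_ge_2 by (intro card_roots_binomial_le) simp
  moreover have "q < card (UNIV :: 'a set)"
    using q_ge_2 by (simp add: card_UNIV power2_eq_square)
  ultimately have "{x :: 'a. x ^ q = (- 1) * x ^ 1 + 0} \<noteq> UNIV" by auto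
  then obtain y :: 'a where "y ^ q \<noteq> - y" by auto
  then have "y + y ^ q \<noteq> 0" by (simp add: add_eq_0_iff)
  then have "subfield_trace q ((y / a) * a) \<noteq> 0"
    using assms by (simp add: subfield_trace_def)
  then show ?thesis by blast
qed

lemma subfield_basis:
  assumes g: "g \<notin> Fq"
  obtains \<alpha> \<beta> where "\<alpha> \<in> Fq" "\<beta> \<in> Fq" "x = \<alpha> + \<beta> * g"
proof -
  have gg: "g - g ^ q \<noteq> 0" using g by (simp add: subfield_iff)
  define \<beta> where "\<beta> = (x - x ^ q) / (g - g ^ q)"
  define \<alpha> where "\<alpha> = x - \<beta> * g"
  have "\<beta> ^ q = (x ^ q - x) / (g ^ q - g)"
    unfolding \<beta>_def power_divide frobenius_diff frobenius_frobenius ..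
  also have "\<dots> = \<beta>"
  proof -
    have "x ^ q - x = - (x - x ^ q)" "g ^ q - g = - (g - g ^ q)" by simp_all
    then show ?thesis unfolding \<beta>_def by (simp only: minus_divide_divide)
  qed
  finally have \<beta>: "\<beta> \<in> Fq" by (simp add: subfield_iff)
  have "\<alpha> ^ q = x ^ q - \<beta> * g ^ q"
    using \<beta> by (simp add: \<alpha>_def subfield_iff frobenius_diff power_mult_distrib)
  also have "\<dots> = \<alpha>"
  proof -
    have "\<beta> * (g - g ^ q) = x - x ^ q" using gg by (simp add: \<beta>_def)
    then show ?thesis by (simp add: \<alpha>_def algebra_simps)
  qed
  finally have "\<alpha> \<in> Fq" by (simp add: subfield_iff)
  with \<beta> show ?thesis by (intro that[of \<alpha> \<beta>]) (simp_all add: \<alpha>_def)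
qed

lemma subfield_independent:
  assumes "g \<notin> Fq" "\<alpha> \<in> Fq" "\<beta> \<in> Fq" "\<alpha> + \<beta> * g = 0"
  shows "\<alpha> = 0" "\<beta> = 0"
proof -
  show "\<beta> = 0"
  proof (rule ccontr)
    assume "\<beta> \<noteq> 0"
    moreover have "\<beta> * g = - \<alpha>" using assms(4) by (simp add: eq_neg_iff_add_eq_0 add.commute)
    ultimately have "g = - \<alpha> / \<beta>" by (metis nonzero_mult_div_cancel_left)
    then show False using assms(1-3) by simp
  qed
  then show "\<alpha> = 0" using assms(4) by simp
qed

end

lemma digits_le_iff:
  fixes q u v w z :: nat
  assumes "u < q" "w < q"
  shows "u + v * q \<le> w + z * q \<longleftrightarrow> v < z \<or> (v = z \<and> u \<le> w)"
proof -
  consider "v < z" | "v = z" | "z < v" by linarith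
  then show ?thesis
  proof cases
    case 1
    then have "Suc v * q \<le> z * q" by (intro mult_le_mono1) simp
    then show ?thesis using assms 1 by simp
  next
    case 3
    then have "Suc z * q \<le> v * q" by (intro mult_le_mono1) simp
    then show ?thesis using assms 3 by simp
  qed simp
qed

definition cyc_shift :: "nat \<Rightarrow> nat \<Rightarrow> nat" where
  "cyc_shift q i = i * q mod cyc_n q"

definition coset_min :: "nat \<Rightarrow> nat \<Rightarrow> nat" where
  "coset_min q x = min x (cyc_shift q x)"

context
  fixes q :: nat
  assumes q_ge_2: "q \<ge> 2"
begin

lemma Suc_cyc_n: "Suc (cyc_n q) = q * q"
  using q_ge_2 by (simp add: cyc_n_def power2_eq_square)

lemma cyc_n_pos: "0 < cyc_n q"
  using q_ge_2 mult_le_mono[of 2 q 2 q] by (simp add: cyc_n_def power2_eq_square)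

lemma cyc_n_digits: "cyc_n q = (q - 1) + (q - 1) * q"
  using Suc_cyc_n q_ge_2 by (cases q) simp_all

lemma digits_less_cyc_n:
  assumes "a < q" "b < q"
  shows "a + b * q < cyc_n q \<longleftrightarrow> \<not> (a = q - 1 \<and> b = q - 1)"
proof -
  have "a + b * q \<le> (q - 1) + (q - 1) * q \<longleftrightarrow> True"
    using assms digits_le_iff[of a q "q - 1" b "q - 1"] by auto
  moreover have "a + b * q = (q - 1) + (q - 1) * q \<longleftrightarrow> a = q - 1 \<and> b = q - 1"
    using assms digits_le_iff[of a q "q - 1" b "q - 1"] digits_le_iff[of "q - 1" q a "q - 1" b]
    by (auto simp: le_antisym)
  ultimately show ?thesis by (auto simp: cyc_n_digits)
qed

lemma cyc_shift_less: "cyc_shift q x < cyc_n q"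
  using cyc_n_pos by (simp add: cyc_shift_def)

lemma cyc_shift_cyc_shift: "x < cyc_n q \<Longrightarrow> cyc_shift q (cyc_shift q x) = x"
proof -
  assume x: "x < cyc_n q"
  have "x * q * q = x + x * cyc_n q"
    using Suc_cyc_n by (metis mult.assoc mult_Suc_right)
  then show ?thesis using x by (simp add: cyc_shift_def mod_mult_left_eq)
qed

lemma cyc_shift_0 [simp]: "cyc_shift q 0 = 0"
  by (simp add: cyc_shift_def)

lemma cyc_shift_eq_0_iff: "x < cyc_n q \<Longrightarrow> cyc_shift q x = 0 \<longleftrightarrow> x = 0"
  using cyc_shift_cyc_shift[of x] by auto

lemma cyc_coset_eq: "x < cyc_n q \<Longrightarrow> cyc_coset q x = {x, cyc_shift q x}"
proof -
  assume x: "x < cyc_n q"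
  have "x * q ^ s mod cyc_n q = (if even s then x else cyc_shift q x)" for s
  proof (induction s)
    case (Suc s)
    have "x * q ^ Suc s mod cyc_n q = cyc_shift q (x * q ^ s mod cyc_n q)"
      by (simp add: cyc_shift_def mod_mult_right_eq mult_ac)
    then show ?case using Suc x by (simp add: cyc_shift_cyc_shift)
  qed (use x in simp)
  then have "cyc_coset q x = {if even s then x else cyc_shift q x | s :: nat. True}"
    by (simp add: cyc_coset_def)
  also have "\<dots> = {x, cyc_shift q x}"
    by (auto intro: exI[of _ 0] exI[of _ 1])
  finally show ?thesis .
qed

lemma coset_leaders_eq: "coset_leaders q = {x. x < cyc_n q \<and> x \<le> cyc_shift q x}"
  by (auto simp: coset_leaders_def cyc_coset_eq min_def split: if_splits)

lemma cyc_shift_digits: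
  assumes "x < cyc_n q"
  shows "cyc_shift q x = x div q + x mod q * q"
proof -
  define a b where "a = x mod q" and "b = x div q"
  have x: "x = a + b * q" by (simp add: a_def b_def)
  have digits: "a < q" "b < q"
    using assms Suc_cyc_n q_ge_2 by (simp_all add: a_def b_def less_mult_imp_div_less)
  have "x * q = a * q + b * (q * q)" by (simp add: x algebra_simps)
  also have "\<dots> = (b + a * q) + b * cyc_n q" by (simp flip: Suc_cyc_n)
  finally have xq: "x * q = (b + a * q) + b * cyc_n q" .
  have "\<not> (b = q - 1 \<and> a = q - 1)"
    using assms by (auto simp: x cyc_n_digits)
  then have "b + a * q < cyc_n q" using digits digits_less_cyc_n by blast
  then show ?thesis by (simp add: cyc_shift_def xq a_def b_def)
qed

lemma cyc_shift_complement:
  assumes "0 < i" "i < cyc_n q"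
  shows "cyc_shift q (cyc_n q - i) = cyc_n q - cyc_shift q i"
proof -
  let ?a = "cyc_shift q (cyc_n q - i)" and ?b = "cyc_shift q i"
  have b_pos: "?b \<noteq> 0" using assms cyc_shift_eq_0_iff by simp
  have "(?a + ?b) mod cyc_n q = ((cyc_n q - i) * q + i * q) mod cyc_n q"
    unfolding cyc_shift_def by (rule mod_add_eq)
  also have "(cyc_n q - i) * q + i * q = cyc_n q * q"
    using assms by (simp flip: add_mult_distrib)
  finally have "(?a + ?b) mod cyc_n q = 0" by simp
  then obtain k where k: "?a + ?b = cyc_n q * k"
    by (auto simp: mod_eq_0_iff_dvd elim: dvdE)
  have "?a < cyc_n q" "?b < cyc_n q"
    by (simp_all add: cyc_shift_less)
  then have "cyc_n q * k < cyc_n q * 2" using k by linarith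
  then have "k < 2" by simp
  moreover have "k \<noteq> 0"
  proof
    assume "k = 0"
    then show False using k b_pos by simp
  qed
  ultimately have "?a + ?b = cyc_n q" using k by (simp add: numeral_2_eq_2 less_Suc_eq)
  then show ?thesis by simp
qed

lemma coset_min_le: "coset_min q x \<le> x"
  by (simp add: coset_min_def)

lemma coset_min_less: "x < cyc_n q \<Longrightarrow> coset_min q x < cyc_n q"
  by (simp add: coset_min_def)

lemma coset_min_in_coset_leaders: "x < cyc_n q \<Longrightarrow> coset_min q x \<in> coset_leaders q"
  by (auto simp: coset_leaders_eq coset_min_def min_def cyc_shift_cyc_shift cyc_shift_less)

lemma coset_min_eq_leader:
  "l \<in> coset_leaders q \<Longrightarrow> x \<in> cyc_coset q l \<Longrightarrow> coset_min q x = l"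
  by (auto simp: coset_leaders_eq cyc_coset_eq coset_min_def min_def cyc_shift_cyc_shift)

lemma mem_cyc_coset_coset_min: "x < cyc_n q \<Longrightarrow> x \<in> cyc_coset q (coset_min q x)"
  by (auto simp: cyc_coset_eq coset_min_less coset_min_def min_def cyc_shift_cyc_shift)

lemma coset_min_cyc_shift: "x < cyc_n q \<Longrightarrow> coset_min q (cyc_shift q x) = coset_min q x"
  by (simp add: coset_min_def cyc_shift_cyc_shift min.commute)

lemma le_cyc_shift_iff:
  assumes "x < cyc_n q"
  shows "x \<le> cyc_shift q x \<longleftrightarrow> x div q \<le> x mod q"
proof -
  have "x mod q < q" "x div q < q"
    using assms Suc_cyc_n q_ge_2 by (simp_all add: less_mult_imp_div_less)
  then show ?thesis
    using digits_le_iff[of "x mod q" q "x div q" "x div q" "x mod q"]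
    by (auto simp: cyc_shift_digits[OF assms])
qed

lemma coset_min_digits:
  assumes "x < cyc_n q"
  shows "coset_min q x = max (x mod q) (x div q) + min (x mod q) (x div q) * q"
proof (cases "x div q \<le> x mod q")
  case True
  then have "coset_min q x = x mod q + x div q * q"
    using le_cyc_shift_iff[OF assms] by (simp add: coset_min_def)
  then show ?thesis using True by simp
next
  case False
  then have "coset_min q x = x div q + x mod q * q"
    using le_cyc_shift_iff[OF assms] by (simp add: coset_min_def cyc_shift_digits[OF assms])
  then show ?thesis using False by simp
qed

lemma coset_leader_digits: "l \<in> coset_leaders q \<Longrightarrow> l div q \<le> l mod q"
  using le_cyc_shift_iff[of l] by (simp add: coset_leaders_eq)

lemma finite_coset_leaders: "finite (coset_leaders q)"
  by (simp add: coset_leaders_eq)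

lemma leader_strict_mono:
  "i < j \<Longrightarrow> j < card (coset_leaders q) \<Longrightarrow> leader q i < leader q j"
  unfolding leader_def using sorted_wrt_nth_less[OF strict_sorted_list_of_set]
  by (simp add: finite_coset_leaders)

lemma leader_le_iff:
  "i < card (coset_leaders q) \<Longrightarrow> j < card (coset_leaders q) \<Longrightarrow>
    leader q i \<le> leader q j \<longleftrightarrow> i \<le> j"
  using leader_strict_mono by (metis leD le_less_linear nat_less_le order_refl)

lemma leader_in_coset_leaders: "j < card (coset_leaders q) \<Longrightarrow> leader q j \<in> coset_leaders q"
  unfolding leader_def using finite_coset_leaders
  by (metis length_sorted_list_of_set nth_mem set_sorted_list_of_set)

lemma coset_leader_is_leader:
  "l \<in> coset_leaders q \<Longrightarrow> \<exists>j < card (coset_leaders q). leader q j = l"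
  unfolding leader_def using finite_coset_leaders
  by (metis in_set_conv_nth length_sorted_list_of_set set_sorted_list_of_set)

lemma leader_less_cyc_n: "j < card (coset_leaders q) \<Longrightarrow> leader q j < cyc_n q"
  using leader_in_coset_leaders by (simp add: coset_leaders_eq)

lemma Delta_eq:
  assumes t: "t < card (coset_leaders q)"
  shows "Delta q t = {x. x < cyc_n q \<and> coset_min q x \<le> leader q t}"
proof (intro set_eqI iffI)
  fix x assume "x \<in> Delta q t"
  then obtain j where j: "j \<le> t" "x \<in> cyc_coset q (leader q j)" by (auto simp: Delta_def)
  then have jl: "j < card (coset_leaders q)" using t by simp
  then have "x < cyc_n q"
    using j(2) leader_less_cyc_n by (auto simp: cyc_coset_eq cyc_shift_less)
  moreover have "coset_min q x = leader q j"
    by (rule coset_min_eq_leader[OF leader_in_coset_leaders[OF jl] j(2)])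
  ultimately show "x \<in> {x. x < cyc_n q \<and> coset_min q x \<le> leader q t}"
    using leader_le_iff[OF jl t] j(1) by simp
next
  fix x assume "x \<in> {x. x < cyc_n q \<and> coset_min q x \<le> leader q t}"
  then have x: "x < cyc_n q" "coset_min q x \<le> leader q t" by auto
  obtain j where j: "j < card (coset_leaders q)" "leader q j = coset_min q x"
    using coset_leader_is_leader[OF coset_min_in_coset_leaders[OF x(1)]] by blast
  then have "j \<le> t" using leader_le_iff[OF j(1) t] x(2) by simp
  then show "x \<in> Delta q t"
    unfolding Delta_def using mem_cyc_coset_coset_min[OF x(1)] j(2) by (intro UN_I[of j]) auto
qed

lemma card_Delta:
  assumes t: "t < card (coset_leaders q)"
  shows "card (Delta q t) = (\<Sum>j\<in>{0..t}. card (cyc_coset q (leader q j)))"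
  unfolding Delta_def
proof (rule card_UN_disjoint)
  show "\<forall>j\<in>{0..t}. finite (cyc_coset q (leader q j))"
    using t leader_less_cyc_n by (simp add: cyc_coset_eq)
  show "\<forall>i\<in>{0..t}. \<forall>j\<in>{0..t}. i \<noteq> j \<longrightarrow> cyc_coset q (leader q i) \<inter> cyc_coset q (leader q j) = {}"
  proof (intro ballI impI)
    fix i j assume ij: "i \<in> {0..t}" "j \<in> {0..t}" "i \<noteq> j"
    then have il: "i < card (coset_leaders q)" and jl: "j < card (coset_leaders q)"
      using t by auto
    show "cyc_coset q (leader q i) \<inter> cyc_coset q (leader q j) = {}"
    proof (rule ccontr)
      assume "cyc_coset q (leader q i) \<inter> cyc_coset q (leader q j) \<noteq> {}"
      then obtain x where "x \<in> cyc_coset q (leader q i)" "x \<in> cyc_coset q (leader q j)" by blast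
      then have "leader q i = leader q j"
        using coset_min_eq_leader leader_in_coset_leaders il jl by metis
      then show False using leader_le_iff[OF il jl] leader_le_iff[OF jl il] ij(3) by simp
    qed
  qed
qed simp

lemma lessThan_leader_subset_Delta:
  assumes t: "t + 1 < card (coset_leaders q)"
  shows "{..<leader q (t + 1)} \<subseteq> Delta q t"
proof
  fix x assume x: "x \<in> {..<leader q (t + 1)}"
  then have xn: "x < cyc_n q" using leader_less_cyc_n[OF t] by simp
  obtain j where j: "j < card (coset_leaders q)" "leader q j = coset_min q x"
    using coset_leader_is_leader[OF coset_min_in_coset_leaders[OF xn]] by blast
  then have "leader q j < leader q (t + 1)" using x coset_min_le[of x] by simp
  then have "j \<le> t" using leader_le_iff[OF t j(1)] by simp
  then have "coset_min q x \<le> leader q t" using leader_le_iff[OF j(1)] t j(2) by simp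
  then show "x \<in> Delta q t" using Delta_eq t xn by simp
qed

end

definition eval_vec :: "nat set \<Rightarrow> (nat \<Rightarrow> 'a) \<Rightarrow> 'a \<Rightarrow> 'a::field" where
  "eval_vec G a = (\<lambda>P. \<Sum>i\<in>G. a i * P ^ i)"

definition cyc_closed :: "nat \<Rightarrow> nat set \<Rightarrow> bool" where
  "cyc_closed q G \<longleftrightarrow> G \<subseteq> {..<cyc_n q} \<and> (\<forall>i\<in>G. cyc_shift q i \<in> G)"

lemma cyc_closed_finite: "cyc_closed q G \<Longrightarrow> finite G"
  unfolding cyc_closed_def using finite_subset by blast

lemma cyc_closed_Delta:
  assumes "q \<ge> 2" "t < card (coset_leaders q)"
  shows "cyc_closed q (Delta q t)"
  using assms by (auto simp: cyc_closed_def Delta_eq cyc_shift_less coset_min_cyc_shift)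

lemma sum_scale_eval_vec:
  assumes "finite J"
  shows "(\<lambda>P. \<Sum>j\<in>J. c j * eval_vec G (w j) P) = eval_vec G (\<lambda>k. \<Sum>j\<in>J. c j * w j k)"
proof
  fix P
  have "(\<Sum>j\<in>J. c j * eval_vec G (w j) P) = (\<Sum>j\<in>J. \<Sum>k\<in>G. c j * w j k * P ^ k)"
    by (simp add: eval_vec_def sum_distrib_left mult.assoc)
  also have "\<dots> = eval_vec G (\<lambda>k. \<Sum>j\<in>J. c j * w j k) P"
    by (subst sum.swap) (simp add: eval_vec_def sum_distrib_right)
  finally show "(\<Sum>j\<in>J. c j * eval_vec G (w j) P) = eval_vec G (\<lambda>k. \<Sum>j\<in>J. c j * w j k) P" .
qed

lemma card_fq_span_le:
  fixes B :: "('a::{field,finite} \<Rightarrow> 'a) set"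
  shows "card (fq_span q B) \<le> card (subfield q :: 'a set) ^ card B"
proof -
  let ?comb = "\<lambda>c. (\<lambda>P. \<Sum>b\<in>B. c b * b P)"
  have "fq_span q B \<subseteq> ?comb ` (B \<rightarrow>\<^sub>E subfield q)"
  proof
    fix v assume "v \<in> fq_span q B"
    then obtain c where c: "\<forall>b\<in>B. c b \<in> subfield q" "v = ?comb c"
      unfolding fq_span_def by blast
    then have "v = ?comb (restrict c B)" by (auto intro!: sum.cong)
    moreover have "restrict c B \<in> B \<rightarrow>\<^sub>E subfield q" using c(1) by auto
    ultimately show "v \<in> ?comb ` (B \<rightarrow>\<^sub>E subfield q)" by blast
  qed
  then have "card (fq_span q B) \<le> card (?comb ` (B \<rightarrow>\<^sub>E subfield q))"
    by (intro card_mono) auto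
  also have "\<dots> \<le> card (B \<rightarrow>\<^sub>E (subfield q :: 'a set))"
    by (rule card_image_le) (simp add: finite_PiE)
  finally show ?thesis by (simp add: card_PiE)
qed

context fq2_field
begin

lemma eval_vec_coeff_eq:
  assumes G: "G \<subseteq> {..<q ^ 2}" and eq: "eval_vec G a = (eval_vec G b :: 'a \<Rightarrow> 'a)" and i: "i \<in> G"
  shows "a i = b i"
proof -
  have fin: "finite G" using G finite_subset by blast
  define f where "f = (\<Sum>j\<in>G. Polynomial.monom (a j - b j) j)"
  have "poly f x = eval_vec G a x - eval_vec G b x" for x
    by (simp add: f_def poly_sum poly_monom eval_vec_def algebra_simps sum_subtractf)
  then have roots: "{x. poly f x = 0} = UNIV" using eq by simp
  have "f = 0"
  proof (rule ccontr)
    assume "f \<noteq> 0"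
    have "degree f < q ^ 2"
    proof -
      have "degree (Polynomial.monom (a j - b j) j) \<le> q ^ 2 - 1" if "j \<in> G" for j
      proof -
        have "j < q ^ 2" using G that by auto
        then show ?thesis using degree_monom_le[of "a j - b j" j] by linarith
      qed
      then have "degree f \<le> q ^ 2 - 1"
        unfolding f_def by (intro degree_sum_le fin)
      moreover have "0 < q ^ 2" using q_ge_2 by simp
      ultimately show ?thesis by linarith
    qed
    then show False
      using card_poly_roots_bound[OF \<open>f \<noteq> 0\<close>] roots by (simp add: card_UNIV)
  qed
  then have "coeff f i = 0" by simp
  then show ?thesis using fin i by (simp add: f_def coeff_sum)
qed

lemma power_cyc_shift: "i < cyc_n q \<Longrightarrow> ((P :: 'a) ^ i) ^ q = P ^ cyc_shift q i"
proof (cases "P = 0")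
  case True
  assume i: "i < cyc_n q"
  then show ?thesis using True q_ge_2 cyc_shift_eq_0_iff[OF q_ge_2 i]
    by (cases "i = 0") (simp_all add: zero_power)
next
  case False
  then show ?thesis by (simp add: cyc_shift_def power_mult power_mod_cyc_n[symmetric])
qed

lemma eval_vec_frobenius:
  assumes G: "cyc_closed q G"
  shows "eval_vec G a (P :: 'a) ^ q = eval_vec G (\<lambda>j. a (cyc_shift q j) ^ q) P"
proof -
  have G': "\<And>i. i \<in> G \<Longrightarrow> i < cyc_n q \<and> cyc_shift q i \<in> G \<and> cyc_shift q (cyc_shift q i) = i"
    using G cyc_shift_cyc_shift[OF q_ge_2] by (auto simp: cyc_closed_def)
  have "eval_vec G a P ^ q = (\<Sum>i\<in>G. a i ^ q * P ^ cyc_shift q i)"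
    using G' by (simp add: eval_vec_def frobenius_sum power_mult_distrib power_cyc_shift)
  also have "\<dots> = (\<Sum>i\<in>G. a (cyc_shift q i) ^ q * P ^ i)"
    by (rule sum.reindex_bij_witness[of _ "cyc_shift q" "cyc_shift q"]) (use G' in auto)
  finally show ?thesis by (simp add: eval_vec_def)
qed

lemma eval_vec_in_subfield_iff:
  assumes G: "cyc_closed q G"
  shows "(\<forall>P. eval_vec G a (P :: 'a) \<in> Fq) \<longleftrightarrow> (\<forall>i\<in>G. a (cyc_shift q i) = a i ^ q)"
proof
  assume sub: "\<forall>P. eval_vec G a (P :: 'a) \<in> Fq"
  have eq: "eval_vec G a = (eval_vec G (\<lambda>j. a (cyc_shift q j) ^ q) :: 'a \<Rightarrow> 'a)"
  proof
    fix P :: 'a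
    have "eval_vec G a P = eval_vec G a P ^ q" using sub by (simp add: subfield_iff)
    also have "\<dots> = eval_vec G (\<lambda>j. a (cyc_shift q j) ^ q) P" by (rule eval_vec_frobenius[OF G])
    finally show "eval_vec G a P = eval_vec G (\<lambda>j. a (cyc_shift q j) ^ q) P" .
  qed
  have "G \<subseteq> {..<q ^ 2}" using G by (auto simp: cyc_closed_def cyc_n_def)
  then have coeff: "a j = a (cyc_shift q j) ^ q" if "j \<in> G" for j
    using eval_vec_coeff_eq[OF _ eq that] by simp
  show "\<forall>i\<in>G. a (cyc_shift q i) = a i ^ q"
  proof
    fix i assume "i \<in> G"
    then have "cyc_shift q i \<in> G" "cyc_shift q (cyc_shift q i) = i"
      using G cyc_shift_cyc_shift[OF q_ge_2] by (auto simp: cyc_closed_def)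
    then show "a (cyc_shift q i) = a i ^ q" using coeff[of "cyc_shift q i"] by simp
  qed
next
  assume conj: "\<forall>i\<in>G. a (cyc_shift q i) = a i ^ q"
  show "\<forall>P. eval_vec G a (P :: 'a) \<in> Fq"
  proof
    fix P :: 'a
    have "eval_vec G a P ^ q = eval_vec G (\<lambda>j. a (cyc_shift q j) ^ q) P"
      by (rule eval_vec_frobenius[OF G])
    also have "\<dots> = eval_vec G a P"
      using conj by (simp add: eval_vec_def frobenius_frobenius)
    finally show "eval_vec G a P \<in> Fq" by (simp add: subfield_iff)
  qed
qed

lemma E_code_eq:
  assumes "cyc_closed q G"
  shows "(E_code q G :: ('a \<Rightarrow> 'a) set) =
    {eval_vec G a | a. \<forall>i\<in>G. a (cyc_shift q i) = a i ^ q}"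
proof -
  have "D_code G = range (eval_vec G :: _ \<Rightarrow> 'a \<Rightarrow> 'a)"
    by (auto simp: D_code_def eval_vec_def)
  then show ?thesis using eval_vec_in_subfield_iff[OF assms] by (auto simp: E_code_def)
qed


text \<open>Minimality is by counting: a span of k vectors has at most card Fq ^ k elements.\<close>
lemma fq_dim_independent_span:
  fixes u :: "'i \<Rightarrow> 'a \<Rightarrow> 'a"
  assumes I: "finite I"
    and indep: "\<And>c. \<forall>j\<in>I. c j \<in> Fq \<Longrightarrow> (\<lambda>P. \<Sum>j\<in>I. c j * u j P) = (\<lambda>_. 0) \<Longrightarrow>
      \<forall>j\<in>I. c j = 0"
  shows "fq_dim q {\<lambda>P. \<Sum>j\<in>I. c j * u j P | c. \<forall>j\<in>I. c j \<in> Fq} = card I"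
    (is "fq_dim q ?S = _")
proof -
  let ?comb = "\<lambda>c. (\<lambda>P. \<Sum>j\<in>I. c j * u j P)"
  have comb_diff: "?comb (\<lambda>j. c j - c' j) = (\<lambda>P. ?comb c P - ?comb c' P)" for c c'
    by (simp add: algebra_simps sum_subtractf)
  have comb_inj: "\<forall>j\<in>I. c j = c' j"
    if "\<forall>j\<in>I. c j \<in> Fq" "\<forall>j\<in>I. c' j \<in> Fq" "?comb c = ?comb c'" for c c'
  proof -
    have "?comb (\<lambda>j. c j - c' j) = (\<lambda>_. 0)"
      using that(3) unfolding comb_diff by (simp add: fun_eq_iff)
    then show ?thesis using indep[of "\<lambda>j. c j - c' j"] that(1,2) by simp
  qed
  have comb_delta: "?comb (\<lambda>i. if i = j then 1 else 0) = u j" if "j \<in> I" for j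
  proof
    fix P
    have "(\<Sum>i\<in>I. (if i = j then 1 else 0) * u i P) = (\<Sum>i\<in>I. if j = i then u j P else 0)"
      by (rule sum.cong) auto
    then show "?comb (\<lambda>i. if i = j then 1 else 0) P = u j P" using I that by simp
  qed
  have u_inj: "inj_on u I"
  proof
    fix j k assume jk: "j \<in> I" "k \<in> I" "u j = u k"
    let ?c = "\<lambda>i. if i = j then 1 else 0" and ?c' = "\<lambda>i. if i = k then 1 else (0 :: 'a)"
    have "\<forall>i\<in>I. ?c i = ?c' i"
      using comb_inj[of ?c ?c'] comb_delta[OF jk(1)] comb_delta[OF jk(2)] jk(3) by simp
    then have "?c j = ?c' j" using jk(1) by blast
    then show "j = k" by (cases "j = k") simp_all
  qed
  have reindex: "(\<lambda>P. \<Sum>b\<in>u ` I. c b * b P) = ?comb (c \<circ> u)" for c :: "('a \<Rightarrow> 'a) \<Rightarrow> 'a"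
    by (simp add: sum.reindex[OF u_inj])
  have span: "fq_span q (u ` I) = ?S"
  proof (intro equalityI subsetI)
    fix v assume "v \<in> fq_span q (u ` I)"
    then obtain c where "\<forall>b\<in>u ` I. c b \<in> Fq" "v = (\<lambda>P. \<Sum>b\<in>u ` I. c b * b P)"
      unfolding fq_span_def by blast
    then have "\<forall>j\<in>I. (c \<circ> u) j \<in> Fq" "v = ?comb (c \<circ> u)"
      unfolding reindex by auto
    then show "v \<in> ?S" by (intro CollectI exI[of _ "c \<circ> u"]) simp
  next
    fix v assume "v \<in> ?S"
    then obtain c where c: "\<forall>j\<in>I. c j \<in> Fq" "v = ?comb c" by blast
    let ?c = "c \<circ> the_inv_into I u"
    have "v = (\<lambda>P. \<Sum>b\<in>u ` I. ?c b * b P)"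
      unfolding reindex c(2) by (intro ext sum.cong) (simp_all add: the_inv_into_f_f[OF u_inj])
    moreover have "\<forall>b\<in>u ` I. ?c b \<in> Fq" using c(1) by (auto simp: the_inv_into_f_f[OF u_inj])
    ultimately show "v \<in> fq_span q (u ` I)" unfolding fq_span_def by blast
  qed
  have "u ` I \<subseteq> ?S"
  proof
    fix v assume "v \<in> u ` I"
    then obtain j where j: "j \<in> I" "v = u j" by blast
    then have "v = ?comb (\<lambda>i. if i = j then 1 else 0)" using comb_delta by simp
    then show "v \<in> ?S" by (intro CollectI exI[of _ "\<lambda>i. if i = j then 1 else 0"]) simp
  qed
  have card_S: "card ?S = card Fq ^ card I"
  proof -
    have "?S = ?comb ` (I \<rightarrow>\<^sub>E Fq)"
    proof (intro equalityI subsetI)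
      fix v assume "v \<in> ?S"
      then obtain c where c: "\<forall>j\<in>I. c j \<in> Fq" "v = ?comb c" by blast
      then have "v = ?comb (restrict c I)" by (auto intro!: sum.cong)
      moreover have "restrict c I \<in> I \<rightarrow>\<^sub>E Fq" using c(1) by auto
      ultimately show "v \<in> ?comb ` (I \<rightarrow>\<^sub>E Fq)" by (rule image_eqI)
    next
      fix v assume "v \<in> ?comb ` (I \<rightarrow>\<^sub>E Fq)"
      then obtain c where "c \<in> I \<rightarrow>\<^sub>E Fq" "v = ?comb c" by blast
      then have "\<forall>j\<in>I. c j \<in> Fq" "v = ?comb c" by auto
      then show "v \<in> ?S" by (intro CollectI exI[of _ c]) simp
    qed
    moreover have "inj_on ?comb (I \<rightarrow>\<^sub>E Fq)"
    proof (rule inj_onI)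
      fix c c' assume c: "c \<in> I \<rightarrow>\<^sub>E Fq" "c' \<in> I \<rightarrow>\<^sub>E Fq" "?comb c = ?comb c'"
      have "\<forall>j\<in>I. c j \<in> Fq" "\<forall>j\<in>I. c' j \<in> Fq"
        using c(1,2) by auto
      then have "\<forall>j\<in>I. c j = c' j" using comb_inj c(3) by blast
      then show "c = c'" by (intro PiE_ext[OF c(1,2)]) simp
    qed
    ultimately show ?thesis by (simp add: card_image card_PiE I)
  qed
  show ?thesis unfolding fq_dim_def
  proof (rule Least_equality)
    show "\<exists>B. B \<subseteq> ?S \<and> card B = card I \<and> fq_span q B = ?S"
      using \<open>u ` I \<subseteq> ?S\<close> span card_image[OF u_inj] by blast
  next
    fix k assume "\<exists>B. B \<subseteq> ?S \<and> card B = k \<and> fq_span q B = ?S"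
    then obtain B where "card B = k" "fq_span q B = ?S" by blast
    then have "card Fq ^ card I \<le> card Fq ^ k"
      using card_fq_span_le[of q B] card_S by simp
    moreover have "1 < card Fq"
      using card_mono[of Fq "{0, 1}"] by (simp add: card_insert_if)
    ultimately show "card I \<le> k" using power_le_imp_le_exp by blast
  qed
qed



end

lemma eval_vec_cong: "(\<And>k. k \<in> G \<Longrightarrow> a k = b k) \<Longrightarrow> eval_vec G a = eval_vec G b"
  by (simp add: eval_vec_def)

text \<open>Coefficients of the basis of the subfield subcode, for g outside the subfield: a singleton
  coset {j} contributes P ^ j, and a coset {j, j'} with j < j' contributes
  subfield_trace q (P ^ j) (indexed by j) and subfield_trace q (g * P ^ j) (indexed by j').\<close>
definition conj_basis :: "nat \<Rightarrow> 'a::field \<Rightarrow> nat \<Rightarrow> nat \<Rightarrow> 'a" where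
  "conj_basis q g j k =
     (if k = j then (if cyc_shift q j < j then g ^ q else 1) else 0) +
     (if k = cyc_shift q j \<and> cyc_shift q j \<noteq> j then (if cyc_shift q j < j then g else 1) else 0)"

definition conj_coords :: "nat \<Rightarrow> 'a::field \<Rightarrow> (nat \<Rightarrow> 'a) \<Rightarrow> nat \<Rightarrow> 'a" where
  "conj_coords q g c k =
     (if cyc_shift q k = k then c k
      else if k < cyc_shift q k then c k + c (cyc_shift q k) * g
      else c k * g ^ q + c (cyc_shift q k))"

lemma sum_conj_basis:
  assumes q: "q \<ge> 2" and G: "cyc_closed q G" and k: "k \<in> G"
  shows "(\<Sum>j\<in>G. c j * conj_basis q g j k) = conj_coords q g c k"
proof -
  let ?s = "cyc_shift q"
  have inv: "\<And>j. j \<in> G \<Longrightarrow> ?s j \<in> G \<and> ?s (?s j) = j"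
    using G cyc_shift_cyc_shift[OF q] by (auto simp: cyc_closed_def)
  have "(\<Sum>j\<in>G. c j * conj_basis q g j k) = (\<Sum>j\<in>{k, ?s k}. c j * conj_basis q g j k)"
  proof (rule sum.mono_neutral_right)
    show "finite G" using cyc_closed_finite[OF G] .
    show "{k, ?s k} \<subseteq> G" using k inv by auto
    show "\<forall>j\<in>G - {k, ?s k}. c j * conj_basis q g j k = 0"
    proof
      fix j assume j: "j \<in> G - {k, ?s k}"
      then have "k \<noteq> ?s j" using inv by force
      then show "c j * conj_basis q g j k = 0" using j by (simp add: conj_basis_def)
    qed
  qed
  then show ?thesis using inv[OF k] by (auto simp: conj_basis_def conj_coords_def)
qed

lemma comb_conj_basis:
  assumes "q \<ge> 2" "cyc_closed q G"
  shows "(\<lambda>P. \<Sum>j\<in>G. c j * eval_vec G (conj_basis q g j) P) = eval_vec G (conj_coords q g c)"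
proof -
  have "(\<lambda>P. \<Sum>j\<in>G. c j * eval_vec G (conj_basis q g j) P) =
      eval_vec G (\<lambda>k. \<Sum>j\<in>G. c j * conj_basis q g j k)"
    by (rule sum_scale_eval_vec[OF cyc_closed_finite[OF assms(2)]])
  also have "\<dots> = eval_vec G (conj_coords q g c)"
    by (rule eval_vec_cong) (rule sum_conj_basis[OF assms])
  finally show ?thesis .
qed

definition paired_exponents :: "nat \<Rightarrow> nat set \<Rightarrow> nat set" where
  "paired_exponents q G = {i \<in> G. 0 < i \<and> cyc_n q - i \<in> G}"

lemma paired_exponents_cyc_shift:
  assumes q: "q \<ge> 2" and G: "cyc_closed q G" and i: "i \<in> paired_exponents q G"
  shows "cyc_shift q i \<in> paired_exponents q G"
proof -
  have i': "i \<in> G" "0 < i" "cyc_n q - i \<in> G" "i < cyc_n q"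
    using i G by (auto simp: paired_exponents_def cyc_closed_def)
  then have "cyc_shift q (cyc_n q - i) \<in> G" using G by (auto simp: cyc_closed_def)
  then show ?thesis
    using i' G cyc_shift_complement[OF q i'(2,4)] cyc_shift_eq_0_iff[OF q i'(4)]
    by (auto simp: paired_exponents_def cyc_closed_def)
qed

lemma cyc_closed_diff_paired_exponents:
  assumes q: "q \<ge> 2" and G: "cyc_closed q G"
  shows "cyc_closed q (G - paired_exponents q G)"
  unfolding cyc_closed_def
proof (intro conjI ballI)
  show "G - paired_exponents q G \<subseteq> {..<cyc_n q}" using G by (auto simp: cyc_closed_def)
  fix i assume i: "i \<in> G - paired_exponents q G"
  then have "cyc_shift q (cyc_shift q i) = i"
    using G cyc_shift_cyc_shift[OF q] by (auto simp: cyc_closed_def)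
  then have "cyc_shift q i \<notin> paired_exponents q G"
    using i paired_exponents_cyc_shift[OF q G, of "cyc_shift q i"] by auto
  then show "cyc_shift q i \<in> G - paired_exponents q G"
    using G i by (auto simp: cyc_closed_def)
qed

definition trace_vec :: "nat \<Rightarrow> 'a::field \<Rightarrow> nat \<Rightarrow> 'a \<Rightarrow> 'a" where
  "trace_vec q \<beta> j = (\<lambda>P. subfield_trace q (\<beta> * P ^ j))"

context fq2_field
begin

lemma conj_coords_conj:
  assumes G: "cyc_closed q G" and c: "\<forall>j\<in>G. c j \<in> Fq" and k: "k \<in> G"
  shows "conj_coords q g c (cyc_shift q k) = conj_coords q g c k ^ q"
proof -
  let ?s = "cyc_shift q"
  have s: "?s k \<in> G" "?s (?s k) = k"
    using G k cyc_shift_cyc_shift[OF q_ge_2] by (auto simp: cyc_closed_def)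
  have cq: "c k ^ q = c k" "c (?s k) ^ q = c (?s k)"
    using c k s by (auto simp: subfield_iff)
  consider "?s k = k" | "k < ?s k" | "?s k < k" by linarith
  then show ?thesis
    by cases (use s cq in \<open>simp_all add: conj_coords_def frobenius_add power_mult_distrib
        frobenius_frobenius add.commute\<close>)
qed

lemma conj_coords_eq_0:
  assumes G: "cyc_closed q G" and g: "g \<notin> Fq" and c: "\<forall>j\<in>G. c j \<in> Fq"
    and zero: "\<forall>k\<in>G. conj_coords q g c k = 0" and k: "k \<in> G"
  shows "c k = 0"
proof -
  let ?s = "cyc_shift q"
  have s: "?s k \<in> G" "?s (?s k) = k"
    using G k cyc_shift_cyc_shift[OF q_ge_2] by (auto simp: cyc_closed_def)
  have pair: "c j = 0 \<and> c (?s j) = 0" if "j \<in> G" "j < ?s j" for j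
  proof -
    have "c j + c (?s j) * g = 0" using zero that by (auto simp: conj_coords_def)
    moreover have "?s j \<in> G" using G that(1) by (auto simp: cyc_closed_def)
    ultimately show ?thesis using subfield_independent[OF g] c that(1) by blast
  qed
  consider "?s k = k" | "k < ?s k" | "?s k < k" by linarith
  then show ?thesis
  proof cases
    case 1 then show ?thesis using zero k by (auto simp: conj_coords_def)
  next
    case 2 then show ?thesis using pair k by blast
  next
    case 3 then show ?thesis using pair[of "?s k"] s by simp
  qed
qed

lemma E_code_conj_basis_span:
  assumes G: "cyc_closed q G" and g: "g \<notin> Fq"
  shows "(E_code q G :: ('a \<Rightarrow> 'a) set) =
    {\<lambda>P. \<Sum>j\<in>G. c j * eval_vec G (conj_basis q g j) P | c. \<forall>j\<in>G. c j \<in> Fq}"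
  unfolding comb_conj_basis[OF q_ge_2 G] E_code_eq[OF G]
proof (intro equalityI subsetI)
  let ?s = "cyc_shift q"
  fix v :: "'a \<Rightarrow> 'a" assume "v \<in> {eval_vec G a | a. \<forall>i\<in>G. a (?s i) = a i ^ q}"
  then obtain a :: "nat \<Rightarrow> 'a" where v: "v = eval_vec G a" and conj: "\<forall>i\<in>G. a (?s i) = a i ^ q" by blast
  have "\<forall>x. \<exists>\<alpha>\<beta>. fst \<alpha>\<beta> \<in> Fq \<and> snd \<alpha>\<beta> \<in> Fq \<and> x = fst \<alpha>\<beta> + snd \<alpha>\<beta> * g"
  proof
    fix x
    obtain \<alpha> \<beta> where "\<alpha> \<in> Fq" "\<beta> \<in> Fq" "x = \<alpha> + \<beta> * g" using subfield_basis[OF g] .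
    then show "\<exists>\<alpha>\<beta>. fst \<alpha>\<beta> \<in> Fq \<and> snd \<alpha>\<beta> \<in> Fq \<and> x = fst \<alpha>\<beta> + snd \<alpha>\<beta> * g" by force
  qed
  then obtain d where d: "\<And>x. fst (d x) \<in> Fq" "\<And>x. snd (d x) \<in> Fq" "\<And>x. x = fst (d x) + snd (d x) * g"
    by metis
  define c where "c k = (if ?s k = k then a k else if k < ?s k then fst (d (a k)) else snd (d (a (?s k))))"
    for k
  have inv: "\<And>k. k \<in> G \<Longrightarrow> ?s k \<in> G \<and> ?s (?s k) = k"
    using G cyc_shift_cyc_shift[OF q_ge_2] by (auto simp: cyc_closed_def)
  have "\<forall>j\<in>G. c j \<in> Fq"
    using conj inv d by (auto simp: c_def subfield_iff)
  moreover have "conj_coords q g c k = a k" if k: "k \<in> G" for k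
  proof -
    consider "?s k = k" | "k < ?s k" | "?s k < k" by linarith
    then show ?thesis
    proof cases
      case 1 then show ?thesis by (simp add: conj_coords_def c_def)
    next
      case 2 then show ?thesis using inv[OF k] d(3)[of "a k"] by (simp add: conj_coords_def c_def)
    next
      case 3
      let ?x = "a (?s k)"
      have "conj_coords q g c k = snd (d ?x) * g ^ q + fst (d ?x)"
        using 3 inv[OF k] by (simp add: conj_coords_def c_def)
      also have "\<dots> = (fst (d ?x) + snd (d ?x) * g) ^ q"
        using d(1,2)[of ?x] by (simp add: frobenius_add power_mult_distrib subfield_iff)
      also have "\<dots> = a k" using d(3)[of ?x] conj inv[OF k] by metis
      finally show ?thesis .
    qed
  qed
  then have "v = eval_vec G (conj_coords q g c)" unfolding v by (metis eval_vec_cong)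
  ultimately show "v \<in> {eval_vec G (conj_coords q g c) | c. \<forall>j\<in>G. c j \<in> Fq}" by blast
next
  fix v :: "'a \<Rightarrow> 'a" assume "v \<in> {eval_vec G (conj_coords q g c) | c. \<forall>j\<in>G. c j \<in> Fq}"
  then obtain c where "v = eval_vec G (conj_coords q g c)" "\<forall>j\<in>G. c j \<in> Fq" by blast
  then show "v \<in> {eval_vec G a | a. \<forall>i\<in>G. a (cyc_shift q i) = a i ^ q}"
    using conj_coords_conj[OF G] by blast
qed

theorem dim_E_code:
  assumes G: "cyc_closed q G"
  shows "fq_dim q (E_code q G :: ('a \<Rightarrow> 'a) set) = card G"
proof -
  obtain g :: 'a where g: "g \<notin> Fq" using subfield_proper by blast
  show ?thesis unfolding E_code_conj_basis_span[OF G g]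
  proof (rule fq_dim_independent_span[OF cyc_closed_finite[OF G]])
    fix c assume c: "\<forall>j\<in>G. c j \<in> Fq"
      and "(\<lambda>P. \<Sum>j\<in>G. c j * eval_vec G (conj_basis q g j) P) = (\<lambda>_. 0)"
    then have "eval_vec G (conj_coords q g c) = eval_vec G (\<lambda>_. 0 :: 'a)"
      unfolding comb_conj_basis[OF q_ge_2 G] by (simp add: eval_vec_def)
    moreover have "G \<subseteq> {..<q ^ 2}" using G by (auto simp: cyc_closed_def cyc_n_def)
    ultimately have "\<forall>k\<in>G. conj_coords q g c k = 0" using eval_vec_coeff_eq by blast
    then show "\<forall>j\<in>G. c j = 0" using conj_coords_eq_0[OF G g c] by blast
  qed
qed


lemma sum_eval_vec_mult:
  assumes G1: "G1 \<subseteq> {..<cyc_n q}" and G2: "G2 \<subseteq> {..<cyc_n q}"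
  shows "(\<Sum>P\<in>UNIV. eval_vec G1 a P * eval_vec G2 b (P :: 'a)) =
    - (\<Sum>i\<in>G1. if cyc_n q - i \<in> G2 then a i * b (cyc_n q - i) else 0)"
proof -
  have fin: "finite G1" "finite G2" using G1 G2 finite_subset by auto
  have "(\<Sum>P\<in>UNIV. eval_vec G1 a P * eval_vec G2 b (P :: 'a)) =
      (\<Sum>P\<in>UNIV. \<Sum>i\<in>G1. \<Sum>j\<in>G2. a i * b j * P ^ (i + j))"
    unfolding eval_vec_def sum_product by (simp add: power_add mult_ac)
  also have "\<dots> = (\<Sum>i\<in>G1. \<Sum>j\<in>G2. \<Sum>P\<in>UNIV. a i * b j * P ^ (i + j))"
    by (subst sum.swap) (simp add: sum.swap[of _ UNIV])
  also have "\<dots> = (\<Sum>i\<in>G1. \<Sum>j\<in>G2. a i * b j * (\<Sum>P\<in>UNIV. P ^ (i + j)))"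
    by (simp add: sum_distrib_left)
  also have "\<dots> = (\<Sum>i\<in>G1. \<Sum>j\<in>G2. if j = cyc_n q - i then - (a i * b j) else 0)"
  proof (intro sum.cong refl)
    fix i j assume "i \<in> G1" "j \<in> G2"
    then have "i < cyc_n q" "j < cyc_n q" using G1 G2 by auto
    then show "a i * b j * (\<Sum>P\<in>UNIV. P ^ (i + j)) = (if j = cyc_n q - i then - (a i * b j) else 0)"
      using sum_powers[of "i + j"] by auto
  qed
  also have "\<dots> = - (\<Sum>i\<in>G1. if cyc_n q - i \<in> G2 then a i * b (cyc_n q - i) else 0)"
    using fin by (simp add: sum.delta' sum_negf[symmetric] if_distrib cong: if_cong)
  finally show ?thesis .
qed

lemma sum_eval_vec_mult_power:
  assumes G: "G \<subseteq> {..<cyc_n q}" and j: "j < cyc_n q"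
  shows "(\<Sum>P\<in>UNIV. eval_vec G a P * (P :: 'a) ^ j) = - (if cyc_n q - j \<in> G then a (cyc_n q - j) else 0)"
proof -
  have "(\<Sum>P\<in>UNIV. eval_vec G a P * (P :: 'a) ^ j) = (\<Sum>P\<in>UNIV. eval_vec G a P * eval_vec {j} (\<lambda>_. 1) P)"
    by (simp add: eval_vec_def)
  also have "\<dots> = - (\<Sum>i\<in>G. if cyc_n q - i \<in> {j} then a i * 1 else 0)"
    using G j by (intro sum_eval_vec_mult) auto
  also have "(\<Sum>i\<in>G. if cyc_n q - i \<in> {j} then a i * 1 else 0) = (\<Sum>i\<in>G. if i = cyc_n q - j then a i else 0)"
    using G j by (intro sum.cong) auto
  moreover have "finite G" using G finite_subset by blast
  ultimately show ?thesis by (simp add: sum.delta)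
qed

lemma trace_vec_in_E_code:
  assumes G: "cyc_closed q G" and j: "j \<in> G"
  shows "trace_vec q \<beta> j \<in> (E_code q G :: ('a \<Rightarrow> 'a) set)"
proof -
  have j': "j < cyc_n q" "cyc_shift q j \<in> G" using G j by (auto simp: cyc_closed_def)
  let ?a = "\<lambda>k. (if k = j then \<beta> else 0) + (if k = cyc_shift q j then \<beta> ^ q else 0)"
  have "trace_vec q \<beta> j = eval_vec G ?a"
  proof
    fix P :: 'a
    have "eval_vec G ?a P = (\<Sum>k\<in>G. if k = j then \<beta> * P ^ k else 0) +
        (\<Sum>k\<in>G. if k = cyc_shift q j then \<beta> ^ q * P ^ k else 0)"
      unfolding eval_vec_def sum.distrib[symmetric] by (rule sum.cong) (auto simp: distrib_right)
    also have "\<dots> = \<beta> * P ^ j + \<beta> ^ q * P ^ cyc_shift q j"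
      using cyc_closed_finite[OF G] j j' by simp
    also have "\<dots> = trace_vec q \<beta> j P"
      using power_cyc_shift[OF j'(1)] by (simp add: trace_vec_def subfield_trace_def power_mult_distrib)
    finally show "trace_vec q \<beta> j P = eval_vec G ?a P" by simp
  qed
  moreover have "\<forall>P. trace_vec q \<beta> j P \<in> Fq" by (simp add: trace_vec_def)
  ultimately show ?thesis by (auto simp: E_code_def D_code_def eval_vec_def)
qed

lemma sum_trace_vec_mult:
  assumes v: "\<forall>P. v P \<in> Fq"
  shows "(\<Sum>P\<in>UNIV. trace_vec q \<beta> j P * v P) = subfield_trace q (\<beta> * (\<Sum>P\<in>UNIV. v P * (P :: 'a) ^ j))"
proof -
  have "trace_vec q \<beta> j P * v P = \<beta> * P ^ j * v P + (\<beta> * P ^ j * v P) ^ q" for P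
    using v by (simp add: trace_vec_def subfield_trace_def subfield_iff power_mult_distrib distrib_right)
  then have "(\<Sum>P\<in>UNIV. trace_vec q \<beta> j P * v P) =
      (\<Sum>P\<in>UNIV. \<beta> * P ^ j * v P) + (\<Sum>P\<in>UNIV. \<beta> * P ^ j * v P) ^ q"
    by (simp add: sum.distrib frobenius_sum)
  also have "(\<Sum>P\<in>UNIV. \<beta> * P ^ j * v P) = \<beta> * (\<Sum>P\<in>UNIV. v P * P ^ j)"
    by (simp add: sum_distrib_left mult_ac)
  finally show ?thesis by (simp add: subfield_trace_def)
qed

text \<open>Nondegeneracy of the trace turns orthogonality to the trace vectors into orthogonality
  to the monomials.\<close>
lemma eucl_dual_E_code_orthogonal_power:
  assumes G: "cyc_closed q G" and y: "y \<in> eucl_dual q (E_code q G :: ('a \<Rightarrow> 'a) set)"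
    and j: "j \<in> G"
  shows "(\<Sum>P\<in>UNIV. y P * P ^ j) = 0"
proof (rule ccontr)
  assume "(\<Sum>P\<in>UNIV. y P * P ^ j) \<noteq> 0"
  then obtain \<beta> where \<beta>: "subfield_trace q (\<beta> * (\<Sum>P\<in>UNIV. y P * P ^ j)) \<noteq> 0"
    using subfield_trace_nondegenerate by blast
  have "\<forall>P. y P \<in> Fq" using y by (simp add: eucl_dual_def)
  then have "(\<Sum>P\<in>UNIV. trace_vec q \<beta> j P * y P) \<noteq> 0" using \<beta> by (simp add: sum_trace_vec_mult)
  then show False using y trace_vec_in_E_code[OF G j] by (auto simp: eucl_dual_def)
qed


theorem E_code_inter_eucl_dual:
  assumes G: "cyc_closed q G"
  shows "(E_code q G :: ('a \<Rightarrow> 'a) set) \<inter> eucl_dual q (E_code q G) =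
    E_code q (G - paired_exponents q G)" (is "_ = E_code q ?H")
proof (intro equalityI subsetI)
  have Gn: "G \<subseteq> {..<cyc_n q}" using G by (simp add: cyc_closed_def)
  have H: "cyc_closed q ?H" by (rule cyc_closed_diff_paired_exponents[OF q_ge_2 G])
  fix v :: "'a \<Rightarrow> 'a"
  assume v: "v \<in> E_code q G \<inter> eucl_dual q (E_code q G)"
  then obtain a where a: "v = eval_vec G a" "\<forall>i\<in>G. a (cyc_shift q i) = a i ^ q"
    unfolding Int_iff E_code_eq[OF G] by blast
  have a_paired: "a i = 0" if i: "i \<in> paired_exponents q G" for i
  proof -
    have i': "cyc_n q - i \<in> G" "i \<in> G" "i < cyc_n q" "0 < i"
      using i Gn by (auto simp: paired_exponents_def)
    have "(\<Sum>P\<in>UNIV. v P * P ^ (cyc_n q - i)) = 0"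
      using v eucl_dual_E_code_orthogonal_power[OF G _ i'(1)] by blast
    then show "a i = 0"
      using sum_eval_vec_mult_power[OF Gn, of "cyc_n q - i" a] i' by (simp add: a(1))
  qed
  have "eval_vec G a P = eval_vec ?H a P" for P
    unfolding eval_vec_def
    by (rule sum.mono_neutral_right) (auto simp: cyc_closed_finite[OF G] a_paired)
  then have "v = eval_vec ?H a" by (auto simp: a(1))
  with a(2) show "v \<in> E_code q ?H" unfolding E_code_eq[OF H] by blast
next
  have Gn: "G \<subseteq> {..<cyc_n q}" using G by (simp add: cyc_closed_def)
  have H: "cyc_closed q ?H" by (rule cyc_closed_diff_paired_exponents[OF q_ge_2 G])
  fix v :: "'a \<Rightarrow> 'a"
  assume v: "v \<in> E_code q ?H"
  then obtain a where a: "v = eval_vec ?H a" "\<forall>i\<in>?H. a (cyc_shift q i) = a i ^ q"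
    unfolding E_code_eq[OF H] by blast
  define a' where "a' k = (if k \<in> ?H then a k else 0)" for k
  have v': "v = eval_vec G a'"
    unfolding a(1) eval_vec_def a'_def
    by (intro ext sum.mono_neutral_cong_left) (auto simp: cyc_closed_finite[OF G])
  have "a' (cyc_shift q i) = a' i ^ q" if "i \<in> G" for i
    using that a(2) H paired_exponents_cyc_shift[OF q_ge_2 G, of i] q_ge_2
    by (auto simp: a'_def cyc_closed_def zero_power)
  with v' have inE: "v \<in> E_code q G" unfolding E_code_eq[OF G] by blast
  have "(\<Sum>P\<in>UNIV. x P * v P) = 0" if xE: "x \<in> E_code q G" for x
  proof -
    obtain b where x: "x = eval_vec G b" using xE unfolding E_code_eq[OF G] by blast
    have Hn: "?H \<subseteq> {..<cyc_n q}" using Gn by auto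
    have "(\<Sum>P\<in>UNIV. x P * v P) =
        - (\<Sum>i\<in>G. if cyc_n q - i \<in> ?H then b i * a (cyc_n q - i) else 0)"
      unfolding x a(1) by (rule sum_eval_vec_mult[OF Gn Hn])
    also have "(\<Sum>i\<in>G. if cyc_n q - i \<in> ?H then b i * a (cyc_n q - i) else 0) = 0"
    proof (intro sum.neutral ballI)
      fix i assume "i \<in> G"
      then have "cyc_n q - i \<notin> ?H" using Gn by (auto simp: paired_exponents_def)
      then show "(if cyc_n q - i \<in> ?H then b i * a (cyc_n q - i) else 0) = 0"
        by (rule if_not_P)
    qed
    finally show ?thesis by simp
  qed
  moreover have "\<forall>P. v P \<in> Fq" using v by (simp add: E_code_def)
  ultimately show "v \<in> E_code q G \<inter> eucl_dual q (E_code q G)"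
    using inE by (simp add: eucl_dual_def)
qed

text \<open>BCH bound: a dual codeword of weight at most D would be orthogonal to the polynomial
  vanishing on its support minus one point, which has degree less than D.\<close>
lemma weight_eucl_dual_E_code_ge:
  assumes G: "cyc_closed q G" and D: "{..<D} \<subseteq> G"
    and y: "y \<in> eucl_dual q (E_code q G :: ('a \<Rightarrow> 'a) set)" and y0: "y \<noteq> (\<lambda>_. 0)"
  shows "D + 1 \<le> weight y"
proof (rule ccontr)
  let ?S = "{P. y P \<noteq> 0}"
  assume "\<not> D + 1 \<le> weight y"
  then have card_S: "card ?S \<le> D" by (simp add: weight_def)
  obtain Q where Q: "y Q \<noteq> 0" using y0 by auto
  define f where "f = (\<Prod>P\<in>?S - {Q}. [:- P, 1:])"
  have "degree f \<le> card (?S - {Q})"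
    unfolding f_def using degree_prod_sum_le[of "?S - {Q}" "\<lambda>P. [:- P, 1:]"] by simp
  also have "\<dots> < D"
  proof -
    have "Q \<in> ?S" using Q by simp
    then have "card (?S - {Q}) = card ?S - 1" "card ?S > 0"
      by (auto simp: card_Diff_singleton card_gt_0_iff)
    then show ?thesis using card_S by linarith
  qed
  finally have deg: "degree f < D" .
  have "(\<Sum>P\<in>UNIV. y P * poly f P) = (\<Sum>k\<le>degree f. coeff f k * (\<Sum>P\<in>UNIV. y P * P ^ k))"
    unfolding poly_altdef by (simp add: sum_distrib_left sum.swap[of _ UNIV] mult_ac)
  also have "\<dots> = 0"
  proof (intro sum.neutral ballI)
    fix k assume "k \<in> {..degree f}"
    then have "k \<in> G" using deg D by auto
    then show "coeff f k * (\<Sum>P\<in>UNIV. y P * P ^ k) = 0"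
      using eucl_dual_E_code_orthogonal_power[OF G y] by simp
  qed
  finally have "(\<Sum>P\<in>UNIV. y P * poly f P) = 0" .
  moreover have "(\<Sum>P\<in>UNIV. y P * poly f P) = y Q * poly f Q"
  proof -
    have "(\<Sum>P\<in>UNIV - {Q}. y P * poly f P) = 0"
    proof (rule sum.neutral, rule ballI)
      fix P assume "P \<in> UNIV - {Q}"
      then show "y P * poly f P = 0" by (cases "y P = 0") (auto simp: f_def poly_prod)
    qed
    then show ?thesis by (simp add: sum.remove[of UNIV Q])
  qed
  moreover have "poly f Q \<noteq> 0" by (simp add: f_def poly_prod)
  ultimately show False using Q by simp
qed

lemma one_in_eucl_dual_E_code:
  assumes G: "cyc_closed q G"
  shows "(\<lambda>_. 1) \<in> eucl_dual q (E_code q G :: ('a \<Rightarrow> 'a) set)"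
proof -
  have Gn: "G \<subseteq> {..<cyc_n q}" using G by (simp add: cyc_closed_def)
  have "(\<Sum>P\<in>UNIV. x P * 1) = 0" if xE: "x \<in> E_code q G" for x :: "'a \<Rightarrow> 'a"
  proof -
    obtain b where x: "x = eval_vec G b" using xE unfolding E_code_eq[OF G] by blast
    have "cyc_n q \<notin> G" using Gn by auto
    then have "(\<Sum>P\<in>UNIV. eval_vec G b P * P ^ 0) = 0"
      using sum_eval_vec_mult_power[OF Gn cyc_n_pos[OF q_ge_2], of b] by simp
    then show ?thesis by (simp add: x)
  qed
  then show ?thesis by (simp add: eucl_dual_def)
qed

theorem min_dist_eucl_dual_E_code_ge:
  assumes G: "cyc_closed q G" and D: "{..<D} \<subseteq> G"
  shows "D + 1 \<le> min_dist (eucl_dual q (E_code q G :: ('a \<Rightarrow> 'a) set))"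
proof -
  let ?W = "{weight y | y. y \<in> eucl_dual q (E_code q G :: ('a \<Rightarrow> 'a) set) \<and> y \<noteq> (\<lambda>_. 0)}"
  have "finite ?W"
    by (rule finite_subset[of _ "weight ` UNIV"]) auto
  moreover have "weight (\<lambda>_. 1 :: 'a) \<in> ?W"
    using one_in_eucl_dual_E_code[OF G] by (auto simp: fun_eq_iff)
  moreover have "\<forall>w\<in>?W. D + 1 \<le> w"
    using weight_eucl_dual_E_code_ge[OF G D] by blast
  ultimately show ?thesis unfolding min_dist_def by (metis (no_types, lifting) Min_in empty_iff)
qed

end

definition digits_min :: "nat \<Rightarrow> nat \<Rightarrow> nat \<Rightarrow> nat" where
  "digits_min q a b = max a b + min a b * q"

definition paired_digits :: "nat \<Rightarrow> nat \<Rightarrow> (nat \<times> nat) set" where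
  "paired_digits q m = {(a, b). a < q \<and> b < q \<and> digits_min q a b \<le> m \<and>
     digits_min q (q - 1 - a) (q - 1 - b) \<le> m}"
definition ebits :: "nat \<Rightarrow> nat \<Rightarrow> int" where
  "ebits q m = (let b0 = int (m mod q); b1 = int (m div q); qi = int q;
     \<delta> = (if odd q \<and> 2 * m \<ge> q^2 - 1 then 1 else 0 :: int)
   in 4 * (b1 * (b1 + 1) div 2
           - max 0 (b1 - (qi + 1) div 2) * (b1 - qi div 2)
           + max 0 (b0 - max (qi - 1 - b1) b1 + 1))
      - 3 * \<delta>
      - 2 * max 0 (int (m div (q + 1)) - (qi - 1) div 2)
      - 2 * min (int (m div (q - 1))) (qi div 2))"

context
  fixes q :: nat
  assumes q_ge_2: "q \<ge> 2"
begin

lemma cyc_n_minus_digits: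
  assumes "a < q" "b < q"
  shows "cyc_n q - (a + b * q) = (q - 1 - a) + (q - 1 - b) * q"
proof -
  have "(q - 1 - b) * q + b * q = (q - 1) * q"
    using assms by (simp flip: add_mult_distrib)
  then show ?thesis using assms by (simp add: cyc_n_digits[OF q_ge_2])
qed

lemma coset_min_eq_digits_min:
  assumes "a < q" "b < q" "a + b * q < cyc_n q"
  shows "coset_min q (a + b * q) = digits_min q a b"
  using coset_min_digits[OF q_ge_2 assms(3)] assms(1) by (simp add: digits_min_def)

text \<open>In base q, the exponent cyc_n q - (a + b * q) has the complementary digits q - 1 - a and
  q - 1 - b.\<close>
lemma card_paired_exponents_eq:
  assumes m: "m < cyc_n q"
  shows "card (paired_exponents q {x. x < cyc_n q \<and> coset_min q x \<le> m}) =
    card (paired_digits q m)"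
proof -
  let ?D = "{x. x < cyc_n q \<and> coset_min q x \<le> m}"
  let ?f = "\<lambda>(a, b). a + b * q"
  have digits_eq: "a = c \<and> b = d" if "a < q" "c < q" "a + b * q = c + d * q" for a b c d
  proof
    have "a = (a + b * q) mod q" using that(1) by simp
    also have "\<dots> = c" unfolding that(3) using that(2) by simp
    finally show "a = c" .
    have "b = (a + b * q) div q" using that(1) by simp
    also have "\<dots> = d" unfolding that(3) using that(2) by simp
    finally show "b = d" .
  qed
  have "inj_on ?f (paired_digits q m)"
    by (rule inj_onI) (auto simp: paired_digits_def dest: digits_eq)
  moreover have "?f ` paired_digits q m = paired_exponents q ?D"
  proof (intro equalityI subsetI)
    fix i assume "i \<in> ?f ` paired_digits q m"
    then obtain a b where ab: "i = a + b * q" "a < q" "b < q" "digits_min q a b \<le> m"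
        "digits_min q (q - 1 - a) (q - 1 - b) \<le> m"
      by (auto simp: paired_digits_def)
    have top: "digits_min q (q - 1) (q - 1) = cyc_n q"
      by (simp add: digits_min_def cyc_n_digits[OF q_ge_2])
    have "\<not> (a = q - 1 \<and> b = q - 1)" using ab(4) m top by auto
    moreover have "\<not> (a = 0 \<and> b = 0)"
    proof
      assume "a = 0 \<and> b = 0"
      then show False using ab(5) m top by simp
    qed
    ultimately have i: "i < cyc_n q" "0 < i"
      using ab(1-3) digits_less_cyc_n[OF q_ge_2] by auto
    have ci: "cyc_n q - i = (q - 1 - a) + (q - 1 - b) * q" "cyc_n q - i < cyc_n q"
      using cyc_n_minus_digits[OF ab(2,3)] ab(1) i by (simp, linarith)
    show "i \<in> paired_exponents q ?D"
      using coset_min_eq_digits_min[of a b] coset_min_eq_digits_min[of "q - 1 - a" "q - 1 - b"]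
        ab i ci q_ge_2 by (auto simp: paired_exponents_def)
  next
    fix i assume "i \<in> paired_exponents q ?D"
    then have i: "i < cyc_n q" "coset_min q i \<le> m" "0 < i" "coset_min q (cyc_n q - i) \<le> m"
      by (auto simp: paired_exponents_def)
    define a b where "a = i mod q" and "b = i div q"
    have ab: "i = a + b * q" "a < q" "b < q"
      using i(1) Suc_cyc_n[OF q_ge_2] q_ge_2 by (auto simp: a_def b_def less_mult_imp_div_less)
    have ci: "cyc_n q - i = (q - 1 - a) + (q - 1 - b) * q" "cyc_n q - i < cyc_n q"
      using cyc_n_minus_digits[OF ab(2,3)] ab(1) i by (simp, linarith)
    have "(a, b) \<in> paired_digits q m"
      using i ab ci coset_min_eq_digits_min[of a b] coset_min_eq_digits_min[of "q - 1 - a" "q - 1 - b"]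
      by (auto simp: paired_digits_def)
    then show "i \<in> ?f ` paired_digits q m" using ab(1) by force
  qed
  ultimately show ?thesis using card_image[of ?f "paired_digits q m"] by simp
qed

end


lemma paired_digits_swap: "(a, b) \<in> paired_digits q m \<longleftrightarrow> (b, a) \<in> paired_digits q m"
  by (auto simp: paired_digits_def digits_min_def max.commute min.commute)

lemma double_sum_diff: "2 * (\<Sum>s<B. s - h) = (B - h) * (B - h - 1)" for B h :: nat
proof (induction B)
  case (Suc B)
  have "2 * (\<Sum>s<Suc B. s - h) = (B - h) * (B - h - 1) + 2 * (B - h)" using Suc by simp
  also have "\<dots> = (Suc B - h) * (Suc B - h - 1)"
  proof (cases "h \<le> B")
    case True
    then obtain d where "B = h + d" by (metis le_add_diff_inverse)
    then show ?thesis by (cases d) (auto simp: algebra_simps Suc_diff_le)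
  qed simp
  finally show ?case .
qed simp

context
  fixes q b0 b1 :: nat
  assumes q_ge_2: "q \<ge> 2" and b1_le_b0: "b1 \<le> b0" and b0_less: "b0 < q"
begin

lemma paired_digits_ordered_iff:
  assumes "s \<le> l"
  shows "(s, l) \<in> paired_digits q (b0 + b1 * q) \<longleftrightarrow>
    l < q \<and> (s < b1 \<or> (s = b1 \<and> l \<le> b0)) \<and>
    (q - 1 - b1 < l \<or> (l = q - 1 - b1 \<and> q - 1 - b0 \<le> s))"
proof (cases "l < q")
  case True
  have "digits_min q s l = l + s * q"
    using assms by (auto simp: digits_min_def max_def min_def)
  then have "digits_min q s l \<le> b0 + b1 * q \<longleftrightarrow> s < b1 \<or> (s = b1 \<and> l \<le> b0)"
    using True b0_less digits_le_iff[of l q b0 s b1] by simp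
  moreover have "max (q - 1 - s) (q - 1 - l) = q - 1 - s" "min (q - 1 - s) (q - 1 - l) = q - 1 - l"
    using assms by auto
  then have "digits_min q (q - 1 - s) (q - 1 - l) = (q - 1 - s) + (q - 1 - l) * q"
    by (simp add: digits_min_def)
  then have "digits_min q (q - 1 - s) (q - 1 - l) \<le> b0 + b1 * q \<longleftrightarrow>
      q - 1 - l < b1 \<or> (q - 1 - l = b1 \<and> q - 1 - s \<le> b0)"
    using b0_less q_ge_2 digits_le_iff[of "q - 1 - s" q b0 "q - 1 - l" b1] by simp
  moreover have "q - 1 - l < b1 \<or> (q - 1 - l = b1 \<and> q - 1 - s \<le> b0) \<longleftrightarrow>
      q - 1 - b1 < l \<or> (l = q - 1 - b1 \<and> q - 1 - b0 \<le> s)"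
    using True assms b1_le_b0 b0_less by auto
  ultimately show ?thesis using True assms by (simp add: paired_digits_def)
qed (simp add: paired_digits_def)

definition upper_partners :: "nat \<Rightarrow> nat set" where
  "upper_partners s = {l. s < l \<and> (s, l) \<in> paired_digits q (b0 + b1 * q)}"

lemma card_paired_digits_split:
  "card (paired_digits q (b0 + b1 * q)) =
    2 * card (Sigma {..<q} upper_partners) + (b1 + 1 - (q - 1 - b1))"
proof -
  let ?P = "paired_digits q (b0 + b1 * q)"
  let ?L = "{x \<in> ?P. fst x < snd x}" and ?G = "{x \<in> ?P. snd x < fst x}"
    and ?E = "{x \<in> ?P. fst x = snd x}"
  have fin: "finite ?P"
    by (rule finite_subset[of _ "{..<q} \<times> {..<q}"]) (auto simp: paired_digits_def)
  have L: "?L = Sigma {..<q} upper_partners"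
    by (auto simp: upper_partners_def paired_digits_def)
  have G: "?G = prod.swap ` ?L"
    using paired_digits_swap by (auto simp: image_iff)
  have E: "?E = (\<lambda>s. (s, s)) ` {q - 1 - b1..b1}"
    using paired_digits_ordered_iff b1_le_b0 b0_less by (auto simp: image_iff)
  have "?P = (?L \<union> ?G) \<union> ?E" by auto
  then have "card ?P = card ((?L \<union> ?G) \<union> ?E)" by simp
  also have "\<dots> = card (?L \<union> ?G) + card ?E"
    using fin by (intro card_Un_disjoint) auto
  also have "card (?L \<union> ?G) = card ?L + card ?G"
    using fin by (intro card_Un_disjoint) auto
  also have "card ?G = card ?L" unfolding G by (rule card_image) (simp add: inj_on_def)
  also have "card ?E = b1 + 1 - (q - 1 - b1)" unfolding E by (simp add: card_image inj_on_def)
  finally show ?thesis unfolding L by simp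
qed

lemma upper_partners_empty: "b1 < s \<Longrightarrow> upper_partners s = {}"
  using paired_digits_ordered_iff by (auto simp: upper_partners_def)

lemma card_upper_partners_less:
  assumes "s < b1"
  shows "card (upper_partners s) =
    (q - 1 - max s (q - 1 - b1)) + (if s < q - 1 - b1 \<and> q - 1 - b0 \<le> s then 1 else 0)"
proof -
  have "upper_partners s = {max s (q - 1 - b1)<..<q} \<union>
      (if s < q - 1 - b1 \<and> q - 1 - b0 \<le> s then {q - 1 - b1} else {})"
    using assms paired_digits_ordered_iff q_ge_2 by (auto simp: upper_partners_def)
  then show ?thesis by (simp add: card_Un_disjoint)
qed

lemma card_upper_partners_b1:
  "card (upper_partners b1) = (b0 - max b1 (q - 1 - b1)) +
    (if b1 < q - 1 - b1 \<and> q - 1 - b1 \<le> b0 \<and> q - 1 - b0 \<le> b1 then 1 else 0)"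
proof -
  have "upper_partners b1 = {max b1 (q - 1 - b1)<..b0} \<union>
      (if b1 < q - 1 - b1 \<and> q - 1 - b1 \<le> b0 \<and> q - 1 - b0 \<le> b1 then {q - 1 - b1} else {})"
    using paired_digits_ordered_iff b0_less by (auto simp: upper_partners_def)
  then show ?thesis by (simp add: card_Un_disjoint)
qed


lemma card_Sigma_upper_partners:
  "card (Sigma {..<q} upper_partners) =
    (b1 * b1 - (\<Sum>s<b1. s - (q - 1 - b1))) + (min b1 (q - 1 - b1) - (q - 1 - b0)) +
    (b0 - max b1 (q - 1 - b1)) +
    (if b1 < q - 1 - b1 \<and> q - 1 - b1 \<le> b0 \<and> q - 1 - b0 \<le> b1 then 1 else 0)"
proof -
  let ?u = "q - 1 - b1" and ?v = "q - 1 - b0"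
  have "card (Sigma {..<q} upper_partners) = (\<Sum>s<q. card (upper_partners s))"
    by (rule card_SigmaI) (auto simp: upper_partners_def paired_digits_def)
  also have "\<dots> = (\<Sum>s<Suc b1. card (upper_partners s))"
    by (rule sum.mono_neutral_right) (use b1_le_b0 b0_less upper_partners_empty in auto)
  also have "\<dots> = (\<Sum>s<b1. (b1 - (s - ?u)) + (if s < ?u \<and> ?v \<le> s then 1 else 0)) +
      card (upper_partners b1)"
  proof -
    have "q - 1 - max s ?u = b1 - (s - ?u)" if "s < b1" for s
      using that b1_le_b0 b0_less by (auto simp: max_def)
    then show ?thesis by (simp add: card_upper_partners_less)
  qed
  also have "(\<Sum>s<b1. (b1 - (s - ?u)) + (if s < ?u \<and> ?v \<le> s then 1 else 0)) =
      (b1 * b1 - (\<Sum>s<b1. s - ?u)) + card {?v..<min b1 ?u}"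
  proof -
    have "(\<Sum>s<b1. b1 - (s - ?u)) = (\<Sum>s<b1. b1) - (\<Sum>s<b1. s - ?u)"
      by (rule sum_subtractf_nat) auto
    moreover have "(\<Sum>s<b1. if s < ?u \<and> ?v \<le> s then 1 else 0) = card {?v..<min b1 ?u}"
    proof -
      have "{s \<in> {..<b1}. s < ?u \<and> ?v \<le> s} = {?v..<min b1 ?u}" by auto
      then show ?thesis
        using sum.inter_filter[of "{..<b1}" "\<lambda>_. 1 :: nat" "\<lambda>s. s < ?u \<and> ?v \<le> s"] by simp
    qed
    ultimately show ?thesis by (simp add: sum.distrib)
  qed
  finally show ?thesis by (simp add: card_upper_partners_b1)
qed

lemma card_paired_digits:
  "card (paired_digits q (b0 + b1 * q)) =
    2 * ((b1 * b1 - (\<Sum>s<b1. s - (q - 1 - b1))) + (min b1 (q - 1 - b1) - (q - 1 - b0)) +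
      (b0 - max b1 (q - 1 - b1)) +
      (if b1 < q - 1 - b1 \<and> q - 1 - b1 \<le> b0 \<and> q - 1 - b0 \<le> b1 then 1 else 0)) +
    (b1 + 1 - (q - 1 - b1))"
  using card_paired_digits_split card_Sigma_upper_partners by simp

end


context
  fixes q b0 b1 :: nat
  assumes q_ge_2: "q \<ge> 2" and b1_le_b0: "b1 \<le> b0" and b0_less: "b0 < q"
    and not_top: "\<not> (b0 = q - 1 \<and> b1 = q - 1)"
begin

lemma digits_div_Suc: "(b0 + b1 * q) div (q + 1) = b1"
proof -
  have "b0 + b1 * q = (b0 - b1) + b1 * (q + 1)" using b1_le_b0 by (simp add: algebra_simps)
  then have "(b0 + b1 * q) div (q + 1) = b1 + (b0 - b1) div (q + 1)"
    by (simp only: div_mult_self1[of "q + 1"])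
  moreover have "b0 - b1 < q + 1" using b0_less by simp
  ultimately show ?thesis by simp
qed

lemma digits_div_pred: "(b0 + b1 * q) div (q - 1) = b1 + (if q - 1 \<le> b0 + b1 then 1 else 0)"
proof -
  have m: "b0 + b1 * q = (b0 + b1) + b1 * (q - 1)" using q_ge_2 by (simp add: algebra_simps)
  have lt: "b0 + b1 < 2 * (q - 1)" using not_top b1_le_b0 b0_less by auto
  show ?thesis
  proof (cases "q - 1 \<le> b0 + b1")
    case True
    have "(b1 + 1) * (q - 1) = b1 * (q - 1) + (q - 1)" by (simp add: add_mult_distrib)
    then have "b0 + b1 * q = (b0 + b1 - (q - 1)) + (b1 + 1) * (q - 1)"
      using m True by linarith
    then have "(b0 + b1 * q) div (q - 1) = (b1 + 1) + (b0 + b1 - (q - 1)) div (q - 1)"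
      using q_ge_2 by (simp only: div_mult_self1[of "q - 1"])
    moreover have "b0 + b1 - (q - 1) < q - 1" using lt True by simp
    ultimately show ?thesis using True by simp
  next
    case False
    have "(b0 + b1 * q) div (q - 1) = b1 + (b0 + b1) div (q - 1)"
      unfolding m using q_ge_2 by (simp only: div_mult_self1[of "q - 1"])
    then show ?thesis using False by simp
  qed
qed

lemma double_digits_ge_iff:
  assumes "odd q"
  shows "q ^ 2 - 1 \<le> 2 * (b0 + b1 * q) \<longleftrightarrow> q div 2 < b1 \<or> (b1 = q div 2 \<and> q div 2 \<le> b0)"
proof -
  obtain k where k: "q = 2 * k + 1" using assms by (metis oddE)
  have "q ^ 2 - 1 = 2 * (k + k * q)" by (simp add: k power2_eq_square algebra_simps)
  then have "q ^ 2 - 1 \<le> 2 * (b0 + b1 * q) \<longleftrightarrow> k + k * q \<le> b0 + b1 * q"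
    by (simp only: mult_le_cancel1) simp
  also have "\<dots> \<longleftrightarrow> k < b1 \<or> (k = b1 \<and> k \<le> b0)"
    by (rule digits_le_iff) (use k b0_less in auto)
  finally show ?thesis using k by auto
qed

lemma ebits_digits:
  "ebits q (b0 + b1 * q) =
    2 * int b1 * int b1 + 2 * int b1
    - 4 * (max 0 (int b1 - int ((q + 1) div 2)) * (int b1 - int (q div 2)))
    + 4 * max 0 (int b0 - max (int q - 1 - int b1) (int b1) + 1)
    - 3 * (if odd q \<and> (q div 2 < b1 \<or> (b1 = q div 2 \<and> q div 2 \<le> b0)) then 1 else 0)
    - 2 * max 0 (int b1 - int ((q - 1) div 2))
    - 2 * min (int b1 + (if q - 1 \<le> b0 + b1 then 1 else 0)) (int (q div 2))"
proof -
  have digits: "(b0 + b1 * q) mod q = b0" "(b0 + b1 * q) div q = b1" using b0_less by auto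
  have halves: "(int q - 1) div 2 = int ((q - 1) div 2)" "(int q + 1) div 2 = int ((q + 1) div 2)"
    "int q div 2 = int (q div 2)" using q_ge_2 by (simp_all add: zdiv_int of_nat_diff)
  have tri: "4 * ((int b1 + int b1 * int b1) div 2) = int b1 * 2 + int b1 * (int b1 * 2)"
  proof -
    have "(int b1 + int b1 * int b1) div 2 * 2 = int b1 + int b1 * int b1" by simp
    then show ?thesis by linarith
  qed
  have "(odd q \<and> q ^ 2 - 1 \<le> 2 * (b0 + b1 * q)) \<longleftrightarrow>
      odd q \<and> (q div 2 < b1 \<or> (b1 = q div 2 \<and> q div 2 \<le> b0))"
    using double_digits_ge_iff by blast
  then show ?thesis
    unfolding ebits_def Let_def digits digits_div_Suc digits_div_pred halves
    by (simp add: tri algebra_simps)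
qed


lemma int_card_paired_digits_lower:
  assumes "b1 < q - 1 - b1"
  shows "int (card (paired_digits q (b0 + b1 * q))) =
    2 * int b1 * int b1 + 4 * max 0 (int b0 + int b1 + 1 - int q) +
    2 * (if q - 1 \<le> b0 + b1 then 1 else 0)"
proof -
  have "(\<Sum>s<b1. s - (q - 1 - b1)) = 0" using assms by simp
  then have "card (paired_digits q (b0 + b1 * q)) =
      2 * (b1 * b1) + 4 * (b0 + b1 + 1 - q) + (if q - 1 \<le> b0 + b1 then 2 else 0)"
    using card_paired_digits[OF q_ge_2 b1_le_b0 b0_less] assms b1_le_b0 b0_less by auto
  then show ?thesis using q_ge_2 by (auto simp: of_nat_diff)
qed

lemma int_card_paired_digits_middle:
  assumes "q = 2 * b1 + 1"
  shows "int (card (paired_digits q (b0 + b1 * q))) = 2 * int b1 * int b1 + 4 * (int b0 - int b1) + 1"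
proof -
  have h: "q - 1 - b1 = b1" "q - 1 - b0 = b1 - (b0 - b1)" "min b1 b1 - (b1 - (b0 - b1)) = b0 - b1"
    using assms b1_le_b0 b0_less by auto
  have "card (paired_digits q (b0 + b1 * q)) = 2 * (b1 * b1) + 4 * (b0 - b1) + 1"
    using card_paired_digits[OF q_ge_2 b1_le_b0 b0_less] unfolding h by simp
  then show ?thesis using b1_le_b0 by (simp add: of_nat_diff)
qed

lemma int_card_paired_digits_upper:
  assumes "q - 1 - b1 < b1"
  shows "int (card (paired_digits q (b0 + b1 * q))) =
    2 * int b1 * int b1 - (2 * int b1 + 1 - int q) * (2 * int b1 - int q) +
    4 * (int b0 - int b1) + 2 * int b1 + 2 - int q"
proof -
  define h where "h = q - 1 - b1"
  define N where "N = b1 - h"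
  define D where "D = b0 - b1"
  have hq: "q = h + b1 + 1" using b1_le_b0 b0_less by (simp add: h_def)
  have bN: "b1 = h + N" "1 \<le> N" using assms by (simp_all add: N_def h_def)
  have bD: "b0 = b1 + D" "D \<le> h" using b1_le_b0 hq b0_less by (simp_all add: D_def)
  have S: "2 * (\<Sum>s<b1. s - h) = N * (N - 1)" by (simp add: double_sum_diff N_def)
  have SN: "N * (N - 1) \<le> b1 * b1" using bN by (intro mult_le_mono) auto
  have rw: "q - 1 - b1 = h" "q - 1 - b0 = h - D" "min b1 h = h" "max b1 h = b1" "\<not> b1 < h"
      "h - (h - D) = D"
    using hq bN bD by auto
  have "card (paired_digits q (b0 + b1 * q)) =
      2 * (b1 * b1) - N * (N - 1) + 4 * D + (2 * b1 + 2 - q)"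
    using card_paired_digits[OF q_ge_2 b1_le_b0 b0_less] S SN bD bN hq unfolding rw by simp
  moreover have "int (N * (N - 1)) = (2 * int b1 + 1 - int q) * (2 * int b1 - int q)"
    using bN hq by (simp add: of_nat_diff)
  ultimately show ?thesis using SN hq bN bD by (simp add: of_nat_diff)
qed


lemma ebits_lower:
  assumes "b1 < q - 1 - b1"
  shows "ebits q (b0 + b1 * q) = int (card (paired_digits q (b0 + b1 * q)))"
proof -
  have r: "max 0 (int b1 - int ((q + 1) div 2)) = 0"
    "max (int q - 1 - int b1) (int b1) = int q - 1 - int b1"
    "\<not> (q div 2 < b1 \<or> (b1 = q div 2 \<and> q div 2 \<le> b0))"
    "max 0 (int b1 - int ((q - 1) div 2)) = 0"
    "min (int b1 + (if q - 1 \<le> b0 + b1 then 1 else 0)) (int (q div 2)) =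
       int b1 + (if q - 1 \<le> b0 + b1 then 1 else 0)"
    using assms by auto
  show ?thesis
    unfolding ebits_digits int_card_paired_digits_lower[OF assms] r using assms r(3) by auto
qed

lemma ebits_middle:
  assumes "q = 2 * b1 + 1"
  shows "ebits q (b0 + b1 * q) = int (card (paired_digits q (b0 + b1 * q)))"
proof -
  have d: "q div 2 = b1" "(q + 1) div 2 = b1 + 1" "(q - 1) div 2 = b1" "odd q" using assms by auto
  have r: "max (int q - 1 - int b1) (int b1) = int b1"
    "min (int b1 + (if q - 1 \<le> b0 + b1 then 1 else 0)) (int b1) = int b1"
    using assms b1_le_b0 by auto
  show ?thesis
    unfolding ebits_digits int_card_paired_digits_middle[OF assms] d r using b1_le_b0 d(4) by simp
qed

lemma ebits_upper:
  assumes "q - 1 - b1 < b1"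
  shows "ebits q (b0 + b1 * q) = int (card (paired_digits q (b0 + b1 * q)))"
proof -
  have r: "max (int q - 1 - int b1) (int b1) = int b1"
    "min (int b1 + (if q - 1 \<le> b0 + b1 then 1 else 0)) (int (q div 2)) = int (q div 2)"
    "max 0 (int b0 - int b1 + 1) = int b0 - int b1 + 1"
    using assms b1_le_b0 by auto
  show ?thesis
  proof (cases "even q")
    case True
    then obtain k where k: "q = 2 * k" by blast
    have d: "q div 2 = k" "(q + 1) div 2 = k" "int ((q - 1) div 2) = int k - 1" "k \<le> b1"
      using k assms q_ge_2 by auto
    show ?thesis
      unfolding ebits_digits int_card_paired_digits_upper[OF assms] r d using True d(4) k
      by (simp add: algebra_simps)
  next
    case False
    then obtain k where k: "q = 2 * k + 1" by (metis oddE)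
    have d: "q div 2 = k" "(q + 1) div 2 = k + 1" "(q - 1) div 2 = k" "k < b1"
      using k assms by auto
    show ?thesis
      unfolding ebits_digits int_card_paired_digits_upper[OF assms] r d using False d(4) k
      by (simp add: algebra_simps)
  qed
qed

lemma ebits_eq_card_paired_digits:
  "ebits q (b0 + b1 * q) = int (card (paired_digits q (b0 + b1 * q)))"
proof -
  consider "b1 < q - 1 - b1" | "q = 2 * b1 + 1" | "q - 1 - b1 < b1"
    using b1_le_b0 b0_less by linarith
  then show ?thesis using ebits_lower ebits_middle ebits_upper by cases
qed

end

context fq2_field
begin

theorem eaqecc_params_E_code:
  assumes G: "cyc_closed q G" and D: "{..<D} \<subseteq> G"
  shows "eaqecc_params q (E_code q G :: ('a \<Rightarrow> 'a) set) (q ^ 2)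
    (int (q ^ 2) - 2 * int (card G) + int (card (paired_exponents q G))) (D + 1)
    (int (card (paired_exponents q G)))"
proof -
  have "paired_exponents q G \<subseteq> G" by (auto simp: paired_exponents_def)
  then have "card (G - paired_exponents q G) = card G - card (paired_exponents q G)"
    "card (paired_exponents q G) \<le> card G"
    using cyc_closed_finite[OF G] by (simp_all add: card_Diff_subset finite_subset card_mono)
  then show ?thesis
    using dim_E_code[OF G] dim_E_code[OF cyc_closed_diff_paired_exponents[OF q_ge_2 G]]
      E_code_inter_eucl_dual[OF G] min_dist_eucl_dual_E_code_ge[OF G D] card_UNIV
    by (simp add: eaqecc_params_def Let_def of_nat_diff)
qed

end

lemma ebits_leader:
  assumes q: "q \<ge> 2" and t: "t < card (coset_leaders q)"
  shows "ebits q (leader q t) = int (card (paired_exponents q (Delta q t)))"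
proof -
  define m where "m = leader q t"
  have m: "m \<in> coset_leaders q" "m < cyc_n q"
    using leader_in_coset_leaders[OF q t] leader_less_cyc_n[OF q t] by (simp_all add: m_def)
  have digits: "m = m mod q + m div q * q" "m mod q < q" "m div q \<le> m mod q"
    using q coset_leader_digits[OF q m(1)] by simp_all
  then have "\<not> (m mod q = q - 1 \<and> m div q = q - 1)"
    using m(2) by (metis cyc_n_digits[OF q] less_irrefl)
  then have "ebits q m = int (card (paired_digits q m))"
    using ebits_eq_card_paired_digits[OF q digits(3,2)] digits(1) by simp
  also have "card (paired_digits q m) = card (paired_exponents q (Delta q t))"
    using card_paired_exponents_eq[OF q m(2)] Delta_eq[OF q t] by (simp add: m_def)
  finally show ?thesis by (simp add: m_def)
qed

theorem mainTheorem4: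
  fixes q t :: nat
  assumes "\<exists>p r. prime p \<and> r > 0 \<and> q = p ^ r"
    and "card (UNIV :: 'a::{field,finite} set) = q ^ 2"
    and "t < leader_z q"
  shows
    "let mt = leader q t; b0 = int (mt mod q); b1 = int (mt div q); qi = int q;
         \<delta> = (if odd q \<and> 2 * mt \<ge> q^2 - 1 then 1 else 0 :: int);
         c = 4 * (b1 * (b1 + 1) div 2
                  - max 0 (b1 - (qi + 1) div 2) * (b1 - qi div 2)
                  + max 0 (b0 - max (qi - 1 - b1) b1 + 1))
             - 3 * \<delta>
             - 2 * max 0 (int (mt div (q + 1)) - (qi - 1) div 2)
             - 2 * min (int (mt div (q - 1))) (qi div 2)
     in eaqecc_params q (E_code q (Delta q t) :: ('a \<Rightarrow> 'a) set) (q^2)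
          (int (q^2) - 2 * (\<Sum>j\<in>{0..t}. int (card (cyc_coset q (leader q j)))) + c)
          (leader q (t + 1) + 1) c"
proof -
  interpret fq2_field q using assms(1,2) by unfold_locales
  have t: "t + 1 < card (coset_leaders q)" using assms(3) by (simp add: leader_z_def)
  then have t': "t < card (coset_leaders q)" by simp
  note G = cyc_closed_Delta[OF q_ge_2 t']
  have "(\<Sum>j\<in>{0..t}. int (card (cyc_coset q (leader q j)))) = int (card (Delta q t))"
    using card_Delta[OF q_ge_2 t'] by simp
  moreover have "ebits q (leader q t) = int (card (paired_exponents q (Delta q t)))"
    by (rule ebits_leader[OF q_ge_2 t'])
  ultimately show ?thesis
    using eaqecc_params_E_code[OF G lessThan_leader_subset_Delta[OF q_ge_2 t]]
    by (simp add: ebits_def Let_def)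
qed

end
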